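(* Let $m\ge1$ and let $K$ be the reproducing kernel of $\mathrm{PW}([-\frac1{2m},\frac1{2m}])$ with respect to the weight $1-s(x)^2$, i.e. the unique kernel with $f(w)=\int_{\mathbb{R}}f(x)\overline{K(w,x)}(1-s(x)^2)\,dx$ for all $w\in\mathbb{C}$ and $f\in\mathrm{PW}([-\frac1{2m},\frac1{2m}])$. Put $u_m=(\pi m\sqrt2)^{-1}$, $s_+(x,y)=\frac12(s(x-y)+s(x+y))$ and $k(w,z)=mK(mw,mz)$. Then for real $y$, \[ k(0,y)=\frac{s_+(u_m,y)}{-\sqrt2\sin(\pi u_m)+\pi u_m\sin(\pi u_m)+\cos(\pi u_m)}, \] and \[ K(0,0)=\frac{1}{\frac1{\sqrt2}\cot\!\big(\frac1{\sqrt2\,m}\big)-\frac{2m-1}{2m}}. \]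
   Context: $s(x)=\frac{\sin(\pi x)}{\pi x}$ (with $s(0)=1$). $\mathrm{PW}([-a,a])$ is the space of $f\in L^2(\mathbb{R})$ whose Fourier transform is supported in $[-a,a]$. Note $1-s(x)^2=W_2(x,0)$ where $W_2(x_1,x_2)=\det\big[\frac{\sin(\pi(x_i-x_j))}{\pi(x_i-x_j)}\big]_{i,j=1}^2$. *)

theory Defs
  imports "HOL-Analysis.Analysis"
begin

definition sinc :: "real \<Rightarrow> real" where
  "sinc x = (if x = 0 then 1 else sin (pi * x) / (pi * x))"

text \<open>Paley-Wiener space PW([-a,a]), functions identified with their entire
  extensions: f is the inverse Fourier transform (convention
  e^{2 pi i x xi}) of some L^2 function g supported on [-a,a].\<close>
definition PW :: "real \<Rightarrow> (complex \<Rightarrow> complex) set" where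
  "PW a = {f. \<exists>g :: real \<Rightarrow> complex.
      g \<in> borel_measurable lborel \<and>
      set_integrable lborel {-a..a} (\<lambda>\<xi>. (cmod (g \<xi>))\<^sup>2) \<and>
      (\<forall>w. f w = set_lebesgue_integral lborel {-a..a}
                 (\<lambda>\<xi>. g \<xi> * exp (2 * of_real pi * \<i> * w * of_real \<xi>)))}"

definition is_repr_kernel :: "real \<Rightarrow> (complex \<Rightarrow> complex \<Rightarrow> complex) \<Rightarrow> bool" where
  "is_repr_kernel a K \<longleftrightarrow>
     (\<forall>w. K w \<in> PW a) \<and>
     (\<forall>f\<in>PW a. \<forall>w. f w =
        (\<integral>x. f (of_real x) * cnj (K w (of_real x)) * of_real (1 - (sinc x)\<^sup>2) \<partial>lborel))"

definition u_m :: "real \<Rightarrow> real" where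
  "u_m m = 1 / (pi * m * sqrt 2)"

definition s_plus :: "real \<Rightarrow> real \<Rightarrow> real" where
  "s_plus x y = (sinc (x - y) + sinc (x + y)) / 2"

definition kscaled :: "real \<Rightarrow> (complex \<Rightarrow> complex \<Rightarrow> complex) \<Rightarrow> complex \<Rightarrow> complex \<Rightarrow> complex" where
  "kscaled m K w z = of_real m * K (of_real m * w) (of_real m * z)"

end

theory Submission
  imports Defs "HOL-Probability.Characteristic_Functions" "HOL-Real_Asymp.Real_Asymp"
begin

text \<open>
  The kernel is pinned down by a single function: if \<open>G \<in> PW([-a,a])\<close> reproduces the value
  at 0, i.e. \<open>f(0) = \<integral> f \<cdot> conj G \<cdot> (1 - s\<^sup>2)\<close> for every \<open>f\<close> in the space, then
  \<open>K(0,\<cdot>) = G\<close>, by the conjugate symmetry of a reproducing kernel.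

  On the Fourier side, multiplication by \<open>s\<^sup>2\<close> is convolution with the tent
  \<open>\<Lambda>(\<xi>) = max 0 (1 - \<bar>\<xi>\<bar>)\<close>, so \<open>G\<close>, the Fourier transform of an even symbol \<open>H\<close> supported
  in \<open>[-a,a]\<close>, reproduces at 0 as soon as \<open>H - \<Lambda> * H = 1\<close> on \<open>(-a,a)\<close>. For
  \<open>a = 1/(2m)\<close> this convolution equation is solved by \<open>H(\<xi>) = cos (\<surd>2 \<xi>) / D\<close> on \<open>[-a,a]\<close>,
  where \<open>D\<close> is the denominator in the statement, and the Fourier transform of this \<open>H\<close> is
  \<open>s\<^sub>+(u\<^sub>m, x/m) / (m D)\<close>.

  The interchanges of integrals are justified by inserting Gaussian cut-offs
  \<open>exp (-x\<^sup>2/(2n\<^sup>2))\<close>, whose Fourier transforms form an approximate identity, and letting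
  \<open>n \<rightarrow> \<infinity>\<close>; the same device shows that Paley--Wiener functions are square integrable on the
  real line.
\<close>

section \<open>Gaussian cut-offs and the Gaussian approximate identity\<close>

definition gauss_cutoff :: "real \<Rightarrow> real \<Rightarrow> real" where
  "gauss_cutoff n x = exp (-(x^2) / (2*n^2))"

definition gauss_kernel :: "real \<Rightarrow> real \<Rightarrow> real" where
  "gauss_kernel n t = n * sqrt (2*pi) * exp (-2*pi^2*n^2*t^2)"

lemma fourier_gauss_cutoff:
  assumes n: "n > 0"
  shows "(\<integral>x. complex_of_real (gauss_cutoff n x) * cis (2*pi*x*t) \<partial>lborel) = complex_of_real (gauss_kernel n t)"
proof -
  have "char std_normal_distribution (2*pi*n*t) = exp (-((2*pi*n*t)^2)/2)"
    by (simp add: char_std_normal_distribution)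
  moreover have "char std_normal_distribution (2*pi*n*t) = (\<integral>y. std_normal_density y *\<^sub>R iexp (2*pi*n*t*y) \<partial>lborel)"
    unfolding char_def by (subst integral_density) auto
  ultimately have char: "(\<integral>y. std_normal_density y *\<^sub>R iexp (2*pi*n*t*y) \<partial>lborel) = exp (-((2*pi*n*t)^2)/2)"
    by simp
  have "(\<integral>x. complex_of_real (gauss_cutoff n x) * cis (2*pi*x*t) \<partial>lborel)
     = \<bar>n\<bar> *\<^sub>R (\<integral>y. complex_of_real (gauss_cutoff n (0 + n*y)) * cis (2*pi*(0+n*y)*t) \<partial>lborel)"
    using n by (intro lborel_integral_real_affine) auto
  also have "(\<lambda>y. complex_of_real (gauss_cutoff n (0 + n*y)) * cis (2*pi*(0+n*y)*t))
      = (\<lambda>y. complex_of_real (sqrt (2*pi)) * (std_normal_density y *\<^sub>R iexp (2*pi*n*t*y)))"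
    using n by (auto simp: gauss_cutoff_def std_normal_density_def cis_conv_exp power_mult_distrib
        scaleR_conv_of_real mult_ac)
  also have "\<bar>n\<bar> *\<^sub>R (\<integral>y. complex_of_real (sqrt (2*pi)) * (std_normal_density y *\<^sub>R iexp (2*pi*n*t*y)) \<partial>lborel)
      = \<bar>n\<bar> *\<^sub>R (complex_of_real (sqrt (2*pi)) * exp (-((2*pi*n*t)^2)/2))"
    by (simp only: integral_mult_right_zero char)
  also have "\<dots> = complex_of_real (gauss_kernel n t)"
    using n by (simp add: gauss_kernel_def scaleR_conv_of_real power_mult_distrib)
  finally show ?thesis .
qed

lemma gauss_cutoff_pos: "gauss_cutoff n x > 0"
  by (simp add: gauss_cutoff_def)

lemma gauss_cutoff_le_1: "gauss_cutoff n x \<le> 1"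
  by (simp add: gauss_cutoff_def)

lemma borel_measurable_gauss_cutoff[measurable]: "gauss_cutoff n \<in> borel_measurable borel"
  unfolding gauss_cutoff_def[abs_def] divide_inverse
  by (intro borel_measurable_continuous_onI continuous_intros)

lemma integrable_gauss_cutoff:
  assumes n: "n > 0"
  shows "integrable lborel (gauss_cutoff n)"
proof -
  have "integrable lborel (\<lambda>x. std_normal_density (0 + (1/n) * x))"
    using n by (intro lborel_integrable_real_affine) auto
  then have "integrable lborel (\<lambda>x. sqrt (2*pi) * std_normal_density (0 + (1/n) * x))"
    by (intro integrable_mult_right)
  moreover have "gauss_cutoff n = (\<lambda>x. sqrt (2*pi) * std_normal_density (0 + (1/n) * x))"
    by (simp add: fun_eq_iff gauss_cutoff_def std_normal_density_def power_divide)
  ultimately show ?thesis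
    by simp
qed

lemma gauss_cutoff_tendsto_1: "(\<lambda>k. gauss_cutoff (Suc k) x) \<longlonglongrightarrow> 1"
proof -
  have "(\<lambda>k. -(x^2) / (2 * (real (Suc k))^2)) \<longlonglongrightarrow> 0"
    by real_asymp
  then have "(\<lambda>k. exp (-(x^2) / (2 * (real (Suc k))^2))) \<longlonglongrightarrow> exp 0"
    by (intro tendsto_exp)
  then show ?thesis
    by (simp add: gauss_cutoff_def)
qed

lemma gauss_kernel_pos: "n > 0 \<Longrightarrow> gauss_kernel n t > 0"
  by (simp add: gauss_kernel_def)

lemma gauss_kernel_le: "n > 0 \<Longrightarrow> gauss_kernel n t \<le> n * sqrt (2*pi)"
  unfolding gauss_kernel_def by (intro mult_left_le) auto

lemma gauss_kernel_minus: "gauss_kernel n (-t) = gauss_kernel n t"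
  by (simp add: gauss_kernel_def)

lemma gauss_kernel_diff_commute: "gauss_kernel n (a - b) = gauss_kernel n (b - a)"
  by (simp add: gauss_kernel_def power2_commute)

lemma borel_measurable_gauss_kernel[measurable]: "gauss_kernel n \<in> borel_measurable borel"
  unfolding gauss_kernel_def[abs_def] by (intro borel_measurable_continuous_onI continuous_intros)

lemma lborel_integral_gauss_kernel_conv:
  fixes f :: "real \<Rightarrow> 'a::{banach, second_countable_topology}"
  assumes n: "n > 0"
  shows "(\<integral>z. gauss_kernel n (p - z) *\<^sub>R f z \<partial>lborel)
       = (\<integral>v. std_normal_density v *\<^sub>R f (p + v / (2*pi*n)) \<partial>lborel)"
proof -
  have "(\<integral>z. gauss_kernel n (p - z) *\<^sub>R f z \<partial>lborel)
      = \<bar>1/(2*pi*n)\<bar> *\<^sub>R (\<integral>v. gauss_kernel n (p - (p + 1/(2*pi*n) * v)) *\<^sub>R f (p + 1/(2*pi*n) * v) \<partial>lborel)"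
    using n by (intro lborel_integral_real_affine) auto
  also have "\<dots> = (\<integral>v. (\<bar>1/(2*pi*n)\<bar> * gauss_kernel n (p - (p + 1/(2*pi*n) * v))) *\<^sub>R f (p + 1/(2*pi*n) * v) \<partial>lborel)"
    by (simp add: integral_scaleR_right[symmetric] del: integral_scaleR_right)
  also have "\<dots> = (\<integral>v. std_normal_density v *\<^sub>R f (p + v / (2*pi*n)) \<partial>lborel)"
  proof (intro Bochner_Integration.integral_cong refl)
    fix v
    have "\<bar>1/(2*pi*n)\<bar> * gauss_kernel n (p - (p + 1/(2*pi*n) * v)) = std_normal_density v"
      using n by (simp add: gauss_kernel_def std_normal_density_def power_mult_distrib power_divide
          real_sqrt_mult field_simps)
    then show "(\<bar>1/(2*pi*n)\<bar> * gauss_kernel n (p - (p + 1/(2*pi*n) * v))) *\<^sub>R f (p + 1/(2*pi*n) * v)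
             = std_normal_density v *\<^sub>R f (p + v / (2*pi*n))"
      by simp
  qed
  finally show ?thesis .
qed

lemma integrable_gauss_kernel:
  assumes n: "n > 0"
  shows "integrable lborel (\<lambda>z. gauss_kernel n (z - p))"
proof -
  have "integrable lborel (\<lambda>z. std_normal_density (0 + (2*pi*n) * z))"
    using n by (intro lborel_integrable_real_affine) auto
  then have "integrable lborel (\<lambda>z. 2*pi*n * std_normal_density (0 + (2*pi*n) * z))"
    by (intro integrable_mult_right)
  moreover have "gauss_kernel n = (\<lambda>z. 2*pi*n * std_normal_density (0 + (2*pi*n) * z))"
    by (simp add: fun_eq_iff gauss_kernel_def std_normal_density_def power_mult_distrib
        real_sqrt_mult field_simps)
  ultimately have "integrable lborel (\<lambda>z. gauss_kernel n (-p + 1 * z))"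
    by (intro lborel_integrable_real_affine) auto
  then show ?thesis
    by simp
qed

lemma integral_gauss_kernel:
  assumes "n > 0"
  shows "(\<integral>z. gauss_kernel n (z - p) \<partial>lborel) = 1"
  using lborel_integral_gauss_kernel_conv[OF assms, of p "\<lambda>_. 1::real"]
  by (simp add: gauss_kernel_diff_commute)

lemma gauss_kernel_approx_identity:
  fixes \<rho> :: "real \<Rightarrow> 'a::{banach, second_countable_topology}"
  assumes meas: "\<rho> \<in> borel_measurable borel" and bound: "\<And>x. norm (\<rho> x) \<le> M"
    and cont: "isCont \<rho> p"
  shows "(\<lambda>k. \<integral>z. gauss_kernel (Suc k) (p - z) *\<^sub>R \<rho> z \<partial>lborel) \<longlonglongrightarrow> \<rho> p"
proof -
  have "(\<lambda>k. \<integral>v. std_normal_density v *\<^sub>R \<rho> (p + v / (2*pi*Suc k)) \<partial>lborel)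
        \<longlonglongrightarrow> (\<integral>v. std_normal_density v *\<^sub>R \<rho> p \<partial>lborel)"
  proof (rule integral_dominated_convergence[where w="\<lambda>v. M * std_normal_density v"])
    show "(\<lambda>v. std_normal_density v *\<^sub>R \<rho> (p + v / (2 * pi * real (Suc k)))) \<in> borel_measurable lborel"
      for k using meas by measurable
    show "AE v in lborel. norm (std_normal_density v *\<^sub>R \<rho> (p + v / (2 * pi * real (Suc k))))
            \<le> M * std_normal_density v" for k
      using bound by (intro AE_I2) (simp add: mult.commute[of M] mult_left_mono)
    show "AE v in lborel. (\<lambda>k. std_normal_density v *\<^sub>R \<rho> (p + v / (2 * pi * real (Suc k))))
            \<longlonglongrightarrow> std_normal_density v *\<^sub>R \<rho> p"
    proof (intro AE_I2 tendsto_scaleR tendsto_const)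
      fix v :: real
      have "(\<lambda>k. v / (2 * pi * real (Suc k))) \<longlonglongrightarrow> 0"
        by real_asymp
      then have "(\<lambda>k. p + v / (2 * pi * real (Suc k))) \<longlonglongrightarrow> p + 0"
        by (intro tendsto_add tendsto_const)
      then show "(\<lambda>k. \<rho> (p + v / (2 * pi * real (Suc k)))) \<longlonglongrightarrow> \<rho> p"
        using cont by (intro isCont_tendsto_compose[where g=\<rho>]) auto
    qed
  qed auto
  then show ?thesis
    by (simp add: lborel_integral_gauss_kernel_conv)
qed

section \<open>Fourier transforms on the real line\<close>

lemma borel_measurable_cis[measurable]: "cis \<in> borel_measurable borel"
proof -
  have "cis = (\<lambda>t. exp (\<i> * complex_of_real t))"
    by (simp add: cis_conv_exp fun_eq_iff)
  moreover have "(\<lambda>t. exp (\<i> * complex_of_real t)) \<in> borel_measurable borel"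
    by (intro borel_measurable_continuous_onI continuous_intros)
  ultimately show ?thesis
    by simp
qed

lemma borel_measurable_cnj[measurable (raw)]:
  assumes "f \<in> borel_measurable M"
  shows "(\<lambda>x. cnj (f x)) \<in> borel_measurable M"
proof -
  have "(cnj :: complex \<Rightarrow> complex) \<in> borel_measurable borel"
    by (intro borel_measurable_continuous_onI continuous_intros)
  from measurable_compose[OF assms this] show ?thesis
    by (simp add: o_def)
qed

lemma fourier_multiplication_formula:
  fixes \<phi> q :: "real \<Rightarrow> complex"
  assumes phi: "integrable lborel \<phi>" and q: "integrable lborel q"
  shows "(\<integral>x. \<phi> x * (\<integral>\<xi>. q \<xi> * cis (2*pi*x*\<xi>) \<partial>lborel) \<partial>lborel)
       = (\<integral>\<xi>. q \<xi> * (\<integral>x. \<phi> x * cis (2*pi*x*\<xi>) \<partial>lborel) \<partial>lborel)"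
proof -
  have [measurable]: "\<phi> \<in> borel_measurable borel" "q \<in> borel_measurable borel"
    using phi q by (auto dest: borel_measurable_integrable)
  let ?f = "\<lambda>x \<xi>. \<phi> x * q \<xi> * cis (2*pi*x*\<xi>)"
  have int: "integrable (lborel \<Otimes>\<^sub>M lborel) (case_prod ?f)"
  proof (rule lborel_pair.Fubini_integrable)
    have "(\<lambda>x. \<integral>\<xi>. norm (?f x \<xi>) \<partial>lborel) = (\<lambda>x. norm (\<phi> x) * (\<integral>\<xi>. norm (q \<xi>) \<partial>lborel))"
      by (simp add: norm_mult)
    then show "integrable lborel (\<lambda>x. \<integral>\<xi>. norm (case_prod ?f (x, \<xi>)) \<partial>lborel)"
      using phi by (simp add: integrable_norm)
    show "AE x in lborel. integrable lborel (\<lambda>\<xi>. case_prod ?f (x, \<xi>))"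
      by (intro AE_I2, rule Bochner_Integration.integrable_bound[where f="\<lambda>\<xi>. \<phi> x * q \<xi>" for x])
        (auto intro!: integrable_mult_right q simp: norm_mult)
  qed measurable
  have "(\<integral>x. \<phi> x * (\<integral>\<xi>. q \<xi> * cis (2*pi*x*\<xi>) \<partial>lborel) \<partial>lborel) = (\<integral>x. (\<integral>\<xi>. ?f x \<xi> \<partial>lborel) \<partial>lborel)"
    by (simp only: integral_mult_right_zero[symmetric] mult.assoc)
  also have "\<dots> = (\<integral>\<xi>. (\<integral>x. ?f x \<xi> \<partial>lborel) \<partial>lborel)"
    using lborel_pair.Fubini_integral[OF int] by simp
  also have "\<dots> = (\<integral>\<xi>. q \<xi> * (\<integral>x. \<phi> x * cis (2*pi*x*\<xi>) \<partial>lborel) \<partial>lborel)"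
    by (simp only: mult.commute[of "\<phi> _"] mult.assoc integral_mult_right_zero)
  finally show ?thesis .
qed

lemma fourier_even:
  fixes f :: "real \<Rightarrow> real"
  assumes f: "integrable lborel f" and even: "\<And>x. f (-x) = f x"
  shows "(\<integral>z. complex_of_real (f z) * cis (2*pi*x*z) \<partial>lborel)
       = complex_of_real (\<integral>z. f z * cos (2*pi*x*z) \<partial>lborel)"
proof -
  have [measurable]: "f \<in> borel_measurable borel"
    using borel_measurable_integrable[OF f] by simp
  have int_cos: "integrable lborel (\<lambda>z. f z * cos (2*pi*x*z))"
    and int_sin: "integrable lborel (\<lambda>z. f z * sin (2*pi*x*z))"
    by (rule Bochner_Integration.integrable_bound[OF f];
        auto simp: abs_mult intro!: AE_I2 mult_left_le)+
  define I where "I = (\<integral>z. f z * sin (2*pi*x*z) \<partial>lborel)"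
  have "I = \<bar>-1\<bar> *\<^sub>R (\<integral>z. f (0 + (-1) * z) * sin (2*pi*x*(0 + (-1) * z)) \<partial>lborel)"
    unfolding I_def by (rule lborel_integral_real_affine) simp
  also have "\<dots> = - I"
    by (simp add: I_def even)
  finally have "I = 0"
    by simp
  have "(\<integral>z. complex_of_real (f z) * cis (2*pi*x*z) \<partial>lborel)
      = (\<integral>z. complex_of_real (f z * cos (2*pi*x*z)) + \<i> * complex_of_real (f z * sin (2*pi*x*z)) \<partial>lborel)"
    by (intro Bochner_Integration.integral_cong refl) (simp add: cis.ctr complex_eq_iff)
  also have "\<dots> = complex_of_real (\<integral>z. f z * cos (2*pi*x*z) \<partial>lborel) + \<i> * complex_of_real I"
    unfolding I_def using int_cos int_sin
    by (simp only: Bochner_Integration.integral_add integrable_of_real integrable_mult_right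
        integral_mult_right_zero integral_complex_of_real)
  finally show ?thesis
    using \<open>I = 0\<close> by simp
qed

lemma integral_gauss_smoothing:
  fixes f :: "real \<Rightarrow> real"
  assumes n: "n > 0" and f: "integrable lborel f"
  shows "integrable lborel (\<lambda>\<xi>. \<integral>\<eta>. f \<eta> * gauss_kernel n (\<eta> - \<xi>) \<partial>lborel)"
    and "(\<integral>\<xi>. (\<integral>\<eta>. f \<eta> * gauss_kernel n (\<eta> - \<xi>) \<partial>lborel) \<partial>lborel) = (\<integral>\<eta>. f \<eta> \<partial>lborel)"
proof -
  have [measurable]: "f \<in> borel_measurable borel"
    using borel_measurable_integrable[OF f] by simp
  have mass1: "(\<integral>\<xi>. gauss_kernel n (\<eta> - \<xi>) \<partial>lborel) = 1" for \<eta>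
    using integral_gauss_kernel[OF n, of \<eta>] by (simp add: gauss_kernel_diff_commute)
  then have mass: "(\<integral>\<xi>. c * gauss_kernel n (\<eta> - \<xi>) \<partial>lborel) = c" for c \<eta>
    by simp
  let ?f = "\<lambda>(\<eta>, \<xi>). f \<eta> * gauss_kernel n (\<eta> - \<xi>)"
  have int: "integrable (lborel \<Otimes>\<^sub>M lborel) ?f"
  proof (rule lborel_pair.Fubini_integrable)
    have "(\<integral>\<xi>. norm (?f (\<eta>, \<xi>)) \<partial>lborel) = \<bar>f \<eta>\<bar>" for \<eta>
      using gauss_kernel_pos[OF n] mass[of "\<bar>f \<eta>\<bar>" \<eta>] by (simp add: abs_mult abs_of_pos)
    then show "integrable lborel (\<lambda>\<eta>. \<integral>\<xi>. norm (?f (\<eta>, \<xi>)) \<partial>lborel)"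
      using f by simp
    show "AE \<eta> in lborel. integrable lborel (\<lambda>\<xi>. ?f (\<eta>, \<xi>))"
      using integrable_gauss_kernel[OF n]
      by (intro AE_I2) (simp add: gauss_kernel_diff_commute[of n _ "\<xi>" for \<xi>])
  qed measurable
  show "integrable lborel (\<lambda>\<xi>. \<integral>\<eta>. f \<eta> * gauss_kernel n (\<eta> - \<xi>) \<partial>lborel)"
    using lborel_pair.integrable_snd[of "\<lambda>\<eta> \<xi>. f \<eta> * gauss_kernel n (\<eta> - \<xi>)"] int by simp
  show "(\<integral>\<xi>. (\<integral>\<eta>. f \<eta> * gauss_kernel n (\<eta> - \<xi>) \<partial>lborel) \<partial>lborel) = (\<integral>\<eta>. f \<eta> \<partial>lborel)"
    using lborel_pair.Fubini_integral[of "\<lambda>\<eta> \<xi>. f \<eta> * gauss_kernel n (\<eta> - \<xi>)"] int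
    by (simp add: mass1)
qed

lemma integrable_mult_gauss_kernel:
  fixes h :: "real \<Rightarrow> real"
  assumes n: "n > 0" and h: "integrable lborel h"
  shows "integrable lborel (\<lambda>\<eta>. h \<eta> * gauss_kernel n (\<eta> - \<xi>))"
proof (rule Bochner_Integration.integrable_bound[where f="\<lambda>\<eta>. n * sqrt (2*pi) * \<bar>h \<eta>\<bar>"])
  show "AE \<eta> in lborel. norm (h \<eta> * gauss_kernel n (\<eta> - \<xi>)) \<le> norm (n * sqrt (2*pi) * \<bar>h \<eta>\<bar>)"
    using gauss_kernel_le[OF n] gauss_kernel_pos[OF n] n
    by (intro AE_I2) (simp add: abs_mult abs_of_pos mult.commute[of "\<bar>h _\<bar>"] mult_right_mono)
qed (use h borel_measurable_integrable[OF h] in auto)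

lemma gauss_smoothing_mult_le:
  fixes G :: "real \<Rightarrow> real"
  assumes n: "n > 0" and G: "integrable lborel G" and G2: "integrable lborel (\<lambda>x. (G x)^2)"
  shows "G \<xi> * (\<integral>\<eta>. G \<eta> * gauss_kernel n (\<eta> - \<xi>) \<partial>lborel)
      \<le> (G \<xi>)^2 / 2 + (\<integral>\<eta>. (G \<eta>)^2 * gauss_kernel n (\<eta> - \<xi>) \<partial>lborel) / 2"
proof -
  have "G \<xi> * (\<integral>\<eta>. G \<eta> * gauss_kernel n (\<eta> - \<xi>) \<partial>lborel) = (\<integral>\<eta>. G \<xi> * G \<eta> * gauss_kernel n (\<eta> - \<xi>) \<partial>lborel)"
    by (simp add: mult.assoc)
  also have "\<dots> \<le> (\<integral>\<eta>. (G \<xi>)^2 / 2 * gauss_kernel n (\<eta> - \<xi>) + (G \<eta>)^2 * gauss_kernel n (\<eta> - \<xi>) / 2 \<partial>lborel)"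
  proof (rule integral_mono)
    show "integrable lborel (\<lambda>\<eta>. G \<xi> * G \<eta> * gauss_kernel n (\<eta> - \<xi>))"
      using integrable_mult_gauss_kernel[OF n G, of \<xi>] by (simp add: mult.assoc)
    show "integrable lborel (\<lambda>\<eta>. (G \<xi>)^2 / 2 * gauss_kernel n (\<eta> - \<xi>) + (G \<eta>)^2 * gauss_kernel n (\<eta> - \<xi>) / 2)"
      using integrable_mult_gauss_kernel[OF n G2, of \<xi>] integrable_gauss_kernel[OF n, of \<xi>] by auto
    fix \<eta>
    have "G \<xi> * G \<eta> \<le> (G \<xi>)^2 / 2 + (G \<eta>)^2 / 2"
      using sum_squares_bound[of "G \<xi>" "G \<eta>"] by (simp add: power2_eq_square)
    from mult_right_mono[OF this less_imp_le[OF gauss_kernel_pos[OF n]]]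
    show "G \<xi> * G \<eta> * gauss_kernel n (\<eta> - \<xi>)
        \<le> (G \<xi>)^2 / 2 * gauss_kernel n (\<eta> - \<xi>) + (G \<eta>)^2 * gauss_kernel n (\<eta> - \<xi>) / 2"
      by (simp add: distrib_right)
  qed
  also have "\<dots> = (G \<xi>)^2 / 2 + (\<integral>\<eta>. (G \<eta>)^2 * gauss_kernel n (\<eta> - \<xi>) \<partial>lborel) / 2"
    using integrable_mult_gauss_kernel[OF n G2, of \<xi>] integrable_gauss_kernel[OF n, of \<xi>]
      integral_gauss_kernel[OF n, of \<xi>] by simp
  finally show ?thesis .
qed

lemma gauss_kernel_schur_bound:
  fixes G :: "real \<Rightarrow> real"
  assumes n: "n > 0" and nonneg: "\<And>x. G x \<ge> 0"
    and G: "integrable lborel G" and G2: "integrable lborel (\<lambda>x. (G x)^2)"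
  shows "integrable lborel (\<lambda>\<xi>. G \<xi> * (\<integral>\<eta>. G \<eta> * gauss_kernel n (\<eta> - \<xi>) \<partial>lborel))"
    and "(\<integral>\<xi>. G \<xi> * (\<integral>\<eta>. G \<eta> * gauss_kernel n (\<eta> - \<xi>) \<partial>lborel) \<partial>lborel) \<le> (\<integral>\<xi>. (G \<xi>)^2 \<partial>lborel)"
proof -
  have [measurable]: "G \<in> borel_measurable borel"
    using borel_measurable_integrable[OF G] by simp
  let ?M = "n * sqrt (2*pi)"
  have smoothing_bound: "\<bar>\<integral>\<eta>. G \<eta> * gauss_kernel n (\<eta> - \<xi>) \<partial>lborel\<bar> \<le> ?M * (\<integral>\<eta>. G \<eta> \<partial>lborel)" for \<xi>
  proof -
    have "\<bar>\<integral>\<eta>. G \<eta> * gauss_kernel n (\<eta> - \<xi>) \<partial>lborel\<bar> \<le> (\<integral>\<eta>. \<bar>G \<eta> * gauss_kernel n (\<eta> - \<xi>)\<bar> \<partial>lborel)"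
      by (rule integral_abs_bound)
    also have "\<dots> \<le> (\<integral>\<eta>. ?M * G \<eta> \<partial>lborel)"
      using integrable_mult_gauss_kernel[OF n G] gauss_kernel_le[OF n] less_imp_le[OF gauss_kernel_pos[OF n]] nonneg
      by (intro integral_mono) (auto intro!: G integrable_mult_right mult_mono
          simp: abs_mult abs_of_pos[OF gauss_kernel_pos[OF n]] mult.commute)
    finally show ?thesis
      by simp
  qed
  show int: "integrable lborel (\<lambda>\<xi>. G \<xi> * (\<integral>\<eta>. G \<eta> * gauss_kernel n (\<eta> - \<xi>) \<partial>lborel))"
  proof (rule Bochner_Integration.integrable_bound[where f="\<lambda>\<xi>. (?M * (\<integral>\<eta>. G \<eta> \<partial>lborel)) * G \<xi>"])
    show "AE \<xi> in lborel. norm (G \<xi> * (\<integral>\<eta>. G \<eta> * gauss_kernel n (\<eta> - \<xi>) \<partial>lborel))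
        \<le> norm ((?M * (\<integral>\<eta>. G \<eta> \<partial>lborel)) * G \<xi>)"
      using smoothing_bound nonneg
      by (intro AE_I2) (simp add: abs_mult abs_of_pos[OF n] mult.commute[of _ "G _"] mult_left_mono)
  qed (use G in auto)
  note smooth_G2 = integral_gauss_smoothing[OF n G2]
  have "(\<integral>\<xi>. G \<xi> * (\<integral>\<eta>. G \<eta> * gauss_kernel n (\<eta> - \<xi>) \<partial>lborel) \<partial>lborel)
      \<le> (\<integral>\<xi>. (G \<xi>)^2 / 2 + (\<integral>\<eta>. (G \<eta>)^2 * gauss_kernel n (\<eta> - \<xi>) \<partial>lborel) / 2 \<partial>lborel)"
    using int G2 smooth_G2(1) gauss_smoothing_mult_le[OF n G G2] by (intro integral_mono) auto
  also have "\<dots> = (\<integral>\<xi>. (G \<xi>)^2 \<partial>lborel)"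
    using G2 smooth_G2 by simp
  finally show "(\<integral>\<xi>. G \<xi> * (\<integral>\<eta>. G \<eta> * gauss_kernel n (\<eta> - \<xi>) \<partial>lborel) \<partial>lborel) \<le> (\<integral>\<xi>. (G \<xi>)^2 \<partial>lborel)" .
qed

lemma integrable_gauss_cutoff_mult:
  fixes h :: "real \<Rightarrow> complex"
  assumes n: "n > 0" and [measurable]: "h \<in> borel_measurable borel" and bound: "\<And>x. cmod (h x) \<le> C"
  shows "integrable lborel (\<lambda>x. complex_of_real (gauss_cutoff n x) * h x)"
proof (rule Bochner_Integration.integrable_bound[where f="\<lambda>x. C * gauss_cutoff n x"])
  show "AE x in lborel. norm (complex_of_real (gauss_cutoff n x) * h x) \<le> norm (C * gauss_cutoff n x)"
    using bound gauss_cutoff_pos[of n] order_trans[OF norm_ge_zero bound]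
    by (intro AE_I2) (simp add: norm_mult abs_mult mult.commute[of C] mult_left_mono)
qed (use integrable_gauss_cutoff[OF n] in auto)

context
  fixes g F :: "real \<Rightarrow> complex"
  assumes g_measurable[measurable]: "g \<in> borel_measurable borel"
    and g_integrable: "integrable lborel g"
    and g_square_integrable: "integrable lborel (\<lambda>\<xi>. (cmod (g \<xi>))^2)"
    and F_fourier: "\<And>x. F x = (\<integral>\<xi>. g \<xi> * cis (2*pi*x*\<xi>) \<partial>lborel)"
begin

lemma borel_measurable_fourier: "F \<in> borel_measurable borel"
proof -
  have "(\<lambda>x. \<integral>\<xi>. g \<xi> * cis (2*pi*x*\<xi>) \<partial>lborel) \<in> borel_measurable borel"
    by (rule lborel.borel_measurable_lebesgue_integral) simp
  then show ?thesis
    by (simp add: F_fourier[abs_def])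
qed

lemma norm_fourier_le: "cmod (F x) \<le> (\<integral>\<xi>. cmod (g \<xi>) \<partial>lborel)"
  unfolding F_fourier by (rule order_trans[OF integral_norm_bound]) (simp add: norm_mult)

lemma gauss_weighted_fourier_square:
  assumes n: "n > 0"
  shows "complex_of_real (\<integral>x. gauss_cutoff n x * (cmod (F x))^2 \<partial>lborel)
       = (\<integral>\<xi>. g \<xi> * cnj (\<integral>\<eta>. g \<eta> * complex_of_real (gauss_kernel n (\<eta> - \<xi>)) \<partial>lborel) \<partial>lborel)"
proof -
  note borel_measurable_fourier[measurable]
  let ?B = "\<integral>\<xi>. cmod (g \<xi>) \<partial>lborel"
  have inner: "(\<integral>x. (complex_of_real (gauss_cutoff n x) * cnj (F x)) * cis (2*pi*x*\<xi>) \<partial>lborel)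
      = cnj (\<integral>\<eta>. g \<eta> * complex_of_real (gauss_kernel n (\<eta> - \<xi>)) \<partial>lborel)" for \<xi>
  proof -
    have "(\<integral>x. (complex_of_real (gauss_cutoff n x) * cnj (F x)) * cis (2*pi*x*\<xi>) \<partial>lborel)
        = cnj (\<integral>x. (complex_of_real (gauss_cutoff n x) * cis (2*pi*x*(-\<xi>))) * F x \<partial>lborel)"
      by (simp add: cis_cnj mult_ac flip: Bochner_Integration.integral_cnj)
    also have "(\<integral>x. (complex_of_real (gauss_cutoff n x) * cis (2*pi*x*(-\<xi>))) * F x \<partial>lborel)
        = (\<integral>\<eta>. g \<eta> * (\<integral>x. (complex_of_real (gauss_cutoff n x) * cis (2*pi*x*(-\<xi>))) * cis (2*pi*x*\<eta>) \<partial>lborel) \<partial>lborel)"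
      unfolding F_fourier
      by (rule fourier_multiplication_formula[OF integrable_gauss_cutoff_mult[OF n, where C=1] g_integrable]) auto
    also have "\<dots> = (\<integral>\<eta>. g \<eta> * complex_of_real (gauss_kernel n (\<eta> - \<xi>)) \<partial>lborel)"
    proof (intro Bochner_Integration.integral_cong refl arg_cong2[where f="(*)"])
      fix \<eta>
      have "(\<integral>x. (complex_of_real (gauss_cutoff n x) * cis (2*pi*x*(-\<xi>))) * cis (2*pi*x*\<eta>) \<partial>lborel)
          = (\<integral>x. complex_of_real (gauss_cutoff n x) * cis (2*pi*x*(\<eta> - \<xi>)) \<partial>lborel)"
        by (simp add: mult.assoc cis_mult algebra_simps)
      then show "(\<integral>x. (complex_of_real (gauss_cutoff n x) * cis (2*pi*x*(-\<xi>))) * cis (2*pi*x*\<eta>) \<partial>lborel)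
          = complex_of_real (gauss_kernel n (\<eta> - \<xi>))"
        using fourier_gauss_cutoff[OF n] by simp
    qed
    finally show ?thesis .
  qed
  have "complex_of_real (\<integral>x. gauss_cutoff n x * (cmod (F x))^2 \<partial>lborel)
      = (\<integral>x. complex_of_real (gauss_cutoff n x * (cmod (F x))^2) \<partial>lborel)"
    by (rule integral_complex_of_real[symmetric])
  also have "\<dots> = (\<integral>x. (complex_of_real (gauss_cutoff n x) * cnj (F x)) * F x \<partial>lborel)"
    by (simp only: of_real_mult complex_norm_square mult_ac)
  also have "\<dots> = (\<integral>\<xi>. g \<xi> * (\<integral>x. (complex_of_real (gauss_cutoff n x) * cnj (F x)) * cis (2*pi*x*\<xi>) \<partial>lborel) \<partial>lborel)"
    unfolding F_fourier[of _]
    by (rule fourier_multiplication_formula[OF _ g_integrable], rule integrable_gauss_cutoff_mult[OF n, where C="?B"])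
       (auto simp: norm_fourier_le[unfolded F_fourier])
  finally show ?thesis
    by (simp add: inner)
qed

lemma gauss_weighted_fourier_square_le:
  assumes n: "n > 0"
  shows "(\<integral>x. gauss_cutoff n x * (cmod (F x))^2 \<partial>lborel) \<le> (\<integral>\<xi>. (cmod (g \<xi>))^2 \<partial>lborel)"
proof -
  note schur = gauss_kernel_schur_bound[OF n norm_ge_zero integrable_norm[OF g_integrable] g_square_integrable]
  let ?S = "\<lambda>\<xi>. \<integral>\<eta>. g \<eta> * complex_of_real (gauss_kernel n (\<eta> - \<xi>)) \<partial>lborel"
  have smoothing_le: "cmod (?S \<xi>) \<le> (\<integral>\<eta>. cmod (g \<eta>) * gauss_kernel n (\<eta> - \<xi>) \<partial>lborel)" for \<xi>
    using integral_norm_bound[of lborel "\<lambda>\<eta>. g \<eta> * complex_of_real (gauss_kernel n (\<eta> - \<xi>))"]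
      gauss_kernel_pos[OF n] by (simp add: norm_mult less_imp_le)
  have pointwise: "cmod (g \<xi> * cnj (?S \<xi>)) \<le> cmod (g \<xi>) * (\<integral>\<eta>. cmod (g \<eta>) * gauss_kernel n (\<eta> - \<xi>) \<partial>lborel)" for \<xi>
    unfolding norm_mult complex_mod_cnj by (intro mult_left_mono smoothing_le) auto
  have "(\<integral>x. gauss_cutoff n x * (cmod (F x))^2 \<partial>lborel)
      \<le> cmod (complex_of_real (\<integral>x. gauss_cutoff n x * (cmod (F x))^2 \<partial>lborel))"
    by simp
  also have "\<dots> \<le> (\<integral>\<xi>. cmod (g \<xi> * cnj (?S \<xi>)) \<partial>lborel)"
    unfolding gauss_weighted_fourier_square[OF n] by (rule integral_norm_bound)
  also have "\<dots> \<le> (\<integral>\<xi>. cmod (g \<xi>) * (\<integral>\<eta>. cmod (g \<eta>) * gauss_kernel n (\<eta> - \<xi>) \<partial>lborel) \<partial>lborel)"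
  proof (rule integral_mono[OF _ schur(1) pointwise])
    show "integrable lborel (\<lambda>\<xi>. cmod (g \<xi> * cnj (?S \<xi>)))"
      by (rule Bochner_Integration.integrable_bound[OF schur(1)])
         (use pointwise order_trans[OF _ abs_ge_self] in \<open>auto intro!: AE_I2\<close>)
  qed
  also have "\<dots> \<le> (\<integral>\<xi>. (cmod (g \<xi>))^2 \<partial>lborel)"
    using schur(2) by simp
  finally show ?thesis .
qed

lemma fourier_square_integrable: "integrable lborel (\<lambda>x. (cmod (F x))^2)"
proof (rule integrableI_nonneg)
  note borel_measurable_fourier[measurable]
  show "(\<lambda>x. (cmod (F x))^2) \<in> borel_measurable lborel"
    by measurable
  show "AE x in lborel. 0 \<le> (cmod (F x))^2"
    by simp
  let ?N = "\<integral>\<xi>. (cmod (g \<xi>))^2 \<partial>lborel"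
  let ?B = "\<integral>\<xi>. cmod (g \<xi>) \<partial>lborel"
  have weighted_le: "(\<integral>\<^sup>+x. ennreal (gauss_cutoff (Suc k) x * (cmod (F x))^2) \<partial>lborel) \<le> ennreal ?N" for k
  proof -
    have "integrable lborel (\<lambda>x. gauss_cutoff (Suc k) x * (cmod (F x))^2)"
    proof (rule Bochner_Integration.integrable_bound[where f="\<lambda>x. ?B^2 * gauss_cutoff (Suc k) x"])
      show "AE x in lborel. norm (gauss_cutoff (Suc k) x * (cmod (F x))^2) \<le> norm (?B^2 * gauss_cutoff (Suc k) x)"
        using gauss_cutoff_pos[of "Suc k"] norm_fourier_le
        by (intro AE_I2) (simp add: abs_mult less_imp_le mult.commute[of "?B^2"] mult_left_mono power_mono)
    qed (auto intro!: integrable_mult_right integrable_gauss_cutoff)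
    then have "(\<integral>\<^sup>+x. ennreal (gauss_cutoff (Suc k) x * (cmod (F x))^2) \<partial>lborel)
        = ennreal (\<integral>x. gauss_cutoff (Suc k) x * (cmod (F x))^2 \<partial>lborel)"
      by (intro nn_integral_eq_integral) (auto intro!: AE_I2 simp: gauss_cutoff_pos less_imp_le)
    also have "\<dots> \<le> ennreal ?N"
      using gauss_weighted_fourier_square_le[of "Suc k"] by (intro ennreal_leI) simp
    finally show ?thesis .
  qed
  have "(\<integral>\<^sup>+x. ennreal ((cmod (F x))^2) \<partial>lborel)
      = (\<integral>\<^sup>+x. liminf (\<lambda>k. ennreal (gauss_cutoff (Suc k) x * (cmod (F x))^2)) \<partial>lborel)"
  proof (intro nn_integral_cong)
    fix x
    have "(\<lambda>k. gauss_cutoff (Suc k) x * (cmod (F x))^2) \<longlonglongrightarrow> 1 * (cmod (F x))^2"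
      by (intro tendsto_mult gauss_cutoff_tendsto_1 tendsto_const)
    then have "(\<lambda>k. ennreal (gauss_cutoff (Suc k) x * (cmod (F x))^2)) \<longlonglongrightarrow> ennreal ((cmod (F x))^2)"
      by (intro tendsto_ennrealI) simp
    then show "ennreal ((cmod (F x))^2) = liminf (\<lambda>k. ennreal (gauss_cutoff (Suc k) x * (cmod (F x))^2))"
      by (simp add: lim_imp_Liminf)
  qed
  also have "\<dots> \<le> liminf (\<lambda>k. \<integral>\<^sup>+x. ennreal (gauss_cutoff (Suc k) x * (cmod (F x))^2) \<partial>lborel)"
    by (intro nn_integral_liminf) simp
  also have "\<dots> \<le> ennreal ?N"
    using weighted_le by (intro order_trans[OF Liminf_le_Limsup Limsup_bounded] always_eventually) auto
  finally show "(\<integral>\<^sup>+x. ennreal ((cmod (F x))^2) \<partial>lborel) < \<infinity>"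
    by (simp add: le_less_trans)
qed

end

lemma lborel_integral_FTC:
  fixes f P :: "real \<Rightarrow> real"
  assumes "a \<le> b" and P: "\<And>x. (P has_real_derivative f x) (at x)" and "continuous_on {a..b} f"
  shows "(\<integral>x. indicator {a..b} x * f x \<partial>lborel) = P b - P a"
proof -
  have "(\<integral>x. indicator {a..b} x *\<^sub>R f x \<partial>lborel) = P b - P a"
    using assms
    by (intro integral_FTC_atLeastAtMost)
       (auto simp: has_real_derivative_iff_has_vector_derivative[symmetric] intro: has_field_derivative_at_within P)
  then show ?thesis
    by simp
qed

lemma lborel_integral_split:
  fixes f :: "real \<Rightarrow> real"
  assumes "a \<le> c" "c \<le> b" and f: "continuous_on {a..b} f"
  shows "(\<integral>x. indicator {a..b} x * f x \<partial>lborel)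
       = (\<integral>x. indicator {a..c} x * f x \<partial>lborel) + (\<integral>x. indicator {c..b} x * f x \<partial>lborel)"
proof -
  have HK: "(\<integral>x. indicator {p..q} x * f x \<partial>lborel) = integral {p..q} f"
    if "continuous_on {p..q} f" for p q
  proof -
    have "set_integrable lborel {p..q} f"
      unfolding set_integrable_def using that by (intro borel_integrable_compact) auto
    then have "(LINT x:{p..q}|lborel. f x) = integral {p..q} f"
      by (rule set_borel_integral_eq_integral(2))
    then show ?thesis
      by (simp add: set_lebesgue_integral_def)
  qed
  have "continuous_on {a..c} f" "continuous_on {c..b} f"
    using assms by (auto intro: continuous_on_subset[OF f])
  then show ?thesis
    unfolding HK[OF f] HK[OF \<open>continuous_on {a..c} f\<close>] HK[OF \<open>continuous_on {c..b} f\<close>]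
    using assms by (intro Henstock_Kurzweil_Integration.integral_combine[symmetric] integrable_continuous_interval) auto
qed


section \<open>The square of the sine cardinal as a Fourier transform\<close>

definition tent :: "real \<Rightarrow> real" where
  "tent z = max 0 (1 - \<bar>z\<bar>)"

lemma tent_eq: "tent z = indicator {-1..1} z * (1 - \<bar>z\<bar>)"
  by (auto simp: tent_def indicator_def)

lemma tent_nonneg: "tent z \<ge> 0"
  by (simp add: tent_def)

lemma tent_minus: "tent (-z) = tent z"
  by (simp add: tent_def)

lemma borel_measurable_tent[measurable]: "tent \<in> borel_measurable borel"
  unfolding tent_def[abs_def] by (intro borel_measurable_continuous_onI continuous_intros)

lemma integrable_tent: "integrable lborel tent"
proof -
  have "integrable lborel (\<lambda>z. indicator {-1..1::real} z *\<^sub>R (1 - \<bar>z\<bar>))"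
    by (intro borel_integrable_compact) (auto intro!: continuous_intros)
  then show ?thesis
    by (simp add: tent_eq[abs_def])
qed

definition sin_prim :: "real \<Rightarrow> real \<Rightarrow> real" where
  "sin_prim b z = (if b = 0 then z else sin (b*z) / b)"

definition cos_prim :: "real \<Rightarrow> real \<Rightarrow> real" where
  "cos_prim b z = (if b = 0 then z^2/2 else (1 - cos (b*z)) / b^2)"

lemma sin_prim_has_derivative: "(sin_prim b has_real_derivative cos (b*z)) (at z)"
proof (cases "b = 0")
  case False
  then have "((\<lambda>z. sin (b*z) / b) has_real_derivative cos (b*z)) (at z)"
    by (auto intro!: derivative_eq_intros)
  then show ?thesis
    using False unfolding sin_prim_def[abs_def] by simp
qed (auto simp: sin_prim_def[abs_def] intro!: derivative_eq_intros)

lemma cos_prim_has_derivative: "(cos_prim b has_real_derivative sin_prim b z) (at z)"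
proof (cases "b = 0")
  case False
  then have "((\<lambda>z. (1 - cos (b*z)) / b^2) has_real_derivative sin (b*z) / b) (at z)"
    by (auto intro!: derivative_eq_intros simp: power2_eq_square)
  then show ?thesis
    using False unfolding cos_prim_def[abs_def] sin_prim_def by simp
qed (auto simp: cos_prim_def[abs_def] sin_prim_def intro!: derivative_eq_intros)

lemma sin_prim_0 [simp]: "sin_prim b 0 = 0"
  and cos_prim_0 [simp]: "cos_prim b 0 = 0"
  by (simp_all add: sin_prim_def cos_prim_def)

lemma sin_prim_minus: "sin_prim b (-z) = - sin_prim b z"
  by (simp add: sin_prim_def)

lemma cos_prim_minus: "cos_prim b (-z) = cos_prim b z"
  by (simp add: cos_prim_def)

lemma sin_prim_eq_sinc: "a > 0 \<Longrightarrow> sin_prim b a = a * sinc (b*a/pi)"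
  by (auto simp: sin_prim_def sinc_def field_simps)

lemma integral_tent_cos: "(\<integral>z. tent z * cos (b*z) \<partial>lborel) = 2 * cos_prim b 1"
proof -
  have "(\<integral>z. tent z * cos (b*z) \<partial>lborel) = (\<integral>z. indicator {-1..1} z * ((1 - \<bar>z\<bar>) * cos (b*z)) \<partial>lborel)"
    by (simp add: tent_eq mult.assoc)
  also have "\<dots> = (\<integral>z. indicator {-1..0} z * ((1 - \<bar>z\<bar>) * cos (b*z)) \<partial>lborel)
                 + (\<integral>z. indicator {0..1} z * ((1 - \<bar>z\<bar>) * cos (b*z)) \<partial>lborel)"
    by (rule lborel_integral_split) (auto intro!: continuous_intros)
  also have "(\<integral>z. indicator {-1..0} z * ((1 - \<bar>z\<bar>) * cos (b*z)) \<partial>lborel)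
           = (\<integral>z. indicator {-1..0} z * ((1 + z) * cos (b*z)) \<partial>lborel)"
    by (intro Bochner_Integration.integral_cong refl) (auto simp: indicator_def)
  also have "\<dots> = ((1 + 0) * sin_prim b 0 - cos_prim b 0) - ((1 + -1) * sin_prim b (-1) - cos_prim b (-1))"
    by (rule lborel_integral_FTC)
       (auto intro!: derivative_eq_intros sin_prim_has_derivative cos_prim_has_derivative continuous_intros
         simp: algebra_simps)
  also have "(\<integral>z. indicator {0..1} z * ((1 - \<bar>z\<bar>) * cos (b*z)) \<partial>lborel)
           = (\<integral>z. indicator {0..1} z * ((1 - z) * cos (b*z)) \<partial>lborel)"
    by (intro Bochner_Integration.integral_cong refl) (auto simp: indicator_def)
  also have "\<dots> = ((1 - 1) * sin_prim b 1 + cos_prim b 1) - ((1 - 0) * sin_prim b 0 + cos_prim b 0)"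
    by (rule lborel_integral_FTC)
       (auto intro!: derivative_eq_intros sin_prim_has_derivative cos_prim_has_derivative continuous_intros
         simp: algebra_simps)
  finally show ?thesis
    by (simp add: cos_prim_minus)
qed

lemma integral_tent: "(\<integral>z. tent z \<partial>lborel) = 1"
  using integral_tent_cos[of 0] by (simp add: cos_prim_def)

lemma sinc_square_fourier:
  "complex_of_real ((sinc x)^2) = (\<integral>z. complex_of_real (tent z) * cis (2*pi*x*z) \<partial>lborel)"
proof -
  have "2 * cos_prim (2*pi*x) 1 = (sinc x)^2"
  proof (cases "x = 0")
    case False
    have double: "cos (2*pi*x) = 1 - 2 * (sin (pi*x))^2"
      using cos_double_sin[of "pi*x"] by (simp add: mult.assoc)
    have double': "cos (pi*(x*2)) = 1 - 2 * (sin (pi*x))^2"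
      using double by (simp add: mult_ac)
    show ?thesis
      using False by (simp add: cos_prim_def sinc_def double double' power_divide power_mult_distrib field_simps)
  qed (simp add: cos_prim_def sinc_def)
  then show ?thesis
    using fourier_even[OF integrable_tent tent_minus, of x] integral_tent_cos[of "2*pi*x"]
    by simp
qed

lemma sinc_abs_le_1: "\<bar>sinc y\<bar> \<le> 1"
proof (cases "y = 0")
  case False
  have "\<bar>sin (pi*y)\<bar> \<le> \<bar>pi*y\<bar>"
    by (rule abs_sin_x_le_abs_x)
  then show ?thesis
    using False by (simp add: sinc_def abs_divide divide_le_eq_1)
qed (simp add: sinc_def)

lemma borel_measurable_sinc[measurable]: "sinc \<in> borel_measurable borel"
  unfolding sinc_def[abs_def] by measurable


section \<open>Paley--Wiener functions as Fourier transforms\<close>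

lemma PW_fourier_representation:
  assumes "F \<in> PW a"
  obtains g :: "real \<Rightarrow> complex"
  where "g \<in> borel_measurable borel" "integrable lborel g" "integrable lborel (\<lambda>z. (cmod (g z))^2)"
    "\<And>z. z \<notin> {-a..a} \<Longrightarrow> g z = 0"
    "\<And>x. F (complex_of_real x) = (\<integral>z. g z * cis (2*pi*x*z) \<partial>lborel)"
proof -
  from assms obtain h :: "real \<Rightarrow> complex"
    where [measurable]: "h \<in> borel_measurable lborel"
      and h2: "set_integrable lborel {-a..a} (\<lambda>z. (cmod (h z))^2)"
      and F: "\<And>w. F w = set_lebesgue_integral lborel {-a..a} (\<lambda>z. h z * exp (2 * of_real pi * \<i> * w * of_real z))"
    unfolding PW_def by auto
  define g where "g z = indicator {-a..a} z *\<^sub>R h z" for z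
  have g_meas: "g \<in> borel_measurable borel"
    unfolding g_def[abs_def] by simp
  have g2: "integrable lborel (\<lambda>z. (cmod (g z))^2)"
  proof -
    have "(\<lambda>z. (cmod (g z))^2) = (\<lambda>z. indicator {-a..a} z *\<^sub>R (cmod (h z))^2)"
      by (auto simp: g_def indicator_def fun_eq_iff)
    then show ?thesis
      using h2 unfolding set_integrable_def by simp
  qed
  have bound: "cmod (g z) \<le> indicator {-a..a} z + (cmod (g z))^2" for z
  proof (cases "z \<in> {-a..a}")
    case True
    have "2 * cmod (h z) \<le> (cmod (h z))^2 + 1"
      using sum_squares_bound[of "cmod (h z)" 1] by simp
    then have "cmod (h z) \<le> 1 + (cmod (h z))^2"
      using norm_ge_zero[of "h z"] by linarith
    with True show ?thesis
      by (simp add: g_def)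
  qed (simp add: g_def)
  have g_int: "integrable lborel g"
  proof (rule Bochner_Integration.integrable_bound[where f="\<lambda>z. indicator {-a..a} z + (cmod (g z))^2"])
    show "integrable lborel (\<lambda>z. indicator {-a..a} z + (cmod (g z))^2)"
      using borel_integrable_compact[of "{-a..a}" "\<lambda>_. 1::real"] g2 by simp
    show "AE z in lborel. norm (g z) \<le> norm (indicator {-a..a} z + (cmod (g z))^2)"
      using bound by (intro AE_I2) (simp add: abs_of_nonneg)
  qed (use g_meas in simp)
  have "\<And>z. z \<notin> {-a..a} \<Longrightarrow> g z = 0"
    by (simp add: g_def)
  moreover have "F (complex_of_real x) = (\<integral>z. g z * cis (2*pi*x*z) \<partial>lborel)" for x
    unfolding F set_lebesgue_integral_def g_def
    by (intro Bochner_Integration.integral_cong refl) (simp add: cis_conv_exp mult_ac)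
  ultimately show ?thesis
    using that g_meas g_int g2 by blast
qed

section \<open>A Fourier-side criterion for the reproducing property\<close>

locale bounded_even_symbol =
  fixes H :: "real \<Rightarrow> real" and a B :: real
  assumes borel_measurable_symbol[measurable]: "H \<in> borel_measurable borel"
    and symbol_bound: "\<And>z. \<bar>H z\<bar> \<le> B"
    and symbol_vanish: "\<And>z. z \<notin> {-a..a} \<Longrightarrow> H z = 0"
    and symbol_even: "\<And>z. H (-z) = H z"
    and isCont_symbol: "\<And>z. \<bar>z\<bar> \<noteq> a \<Longrightarrow> isCont H z"
begin

lemma symbol_bound_nonneg: "B \<ge> 0"
  using symbol_bound[of 0] by simp

lemma symbol_bound_indicator: "\<bar>H z\<bar> \<le> B * indicator {-a..a} z"
  using symbol_bound[of z] symbol_vanish[of z] by (cases "z \<in> {-a..a}") auto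

lemma integrable_symbol: "integrable lborel H"
proof (rule Bochner_Integration.integrable_bound[where f="\<lambda>z. B * indicator {-a..a} z"])
  show "integrable lborel (\<lambda>z. B * indicator {-a..a} z)"
    using borel_integrable_compact[of "{-a..a}" "\<lambda>_. B"] by (simp add: mult.commute)
  show "AE z in lborel. norm (H z) \<le> norm (B * indicator {-a..a} z)"
    using symbol_bound_indicator symbol_bound_nonneg by (intro AE_I2) (simp add: abs_mult)
qed simp_all

lemma integrable_symbol_square: "integrable lborel (\<lambda>z. (H z)^2)"
proof (rule Bochner_Integration.integrable_bound[where f="\<lambda>z. B * \<bar>H z\<bar>"])
  have "\<bar>H z\<bar> * \<bar>H z\<bar> \<le> B * \<bar>H z\<bar>" for z
    by (rule mult_right_mono[OF symbol_bound]) simp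
  then show "AE z in lborel. norm ((H z)^2) \<le> norm (B * \<bar>H z\<bar>)"
    using symbol_bound_nonneg by (intro AE_I2) (simp add: power2_eq_square abs_mult)
qed (use integrable_symbol in auto)

definition cos_transform :: "real \<Rightarrow> real" where
  "cos_transform x = (\<integral>z. H z * cos (2*pi*x*z) \<partial>lborel)"

lemma fourier_symbol:
  "(\<integral>z. complex_of_real (H z) * cis (2*pi*x*z) \<partial>lborel) = complex_of_real (cos_transform x)"
  unfolding cos_transform_def by (rule fourier_even[OF integrable_symbol symbol_even])

lemma borel_measurable_cos_transform[measurable]: "cos_transform \<in> borel_measurable borel"
  unfolding cos_transform_def[abs_def] by (rule lborel.borel_measurable_lebesgue_integral) simp

lemma cos_transform_bound: "\<bar>cos_transform x\<bar> \<le> (\<integral>z. \<bar>H z\<bar> \<partial>lborel)"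
proof -
  have pointwise: "\<bar>H z * cos (2*pi*x*z)\<bar> \<le> \<bar>H z\<bar>" for z
    by (simp add: abs_mult mult_left_le)
  have "integrable lborel (\<lambda>z. H z * cos (2*pi*x*z))"
    by (rule Bochner_Integration.integrable_bound[OF integrable_symbol]) (use pointwise in auto)
  then have "(\<integral>z. \<bar>H z * cos (2*pi*x*z)\<bar> \<partial>lborel) \<le> (\<integral>z. \<bar>H z\<bar> \<partial>lborel)"
    using integrable_symbol pointwise by (intro integral_mono integrable_abs)
  with integral_abs_bound show ?thesis
    unfolding cos_transform_def by (rule order_trans)
qed

lemma integrable_cos_transform_square: "integrable lborel (\<lambda>x. (cos_transform x)^2)"
proof -
  have "integrable lborel (\<lambda>x. (cmod (complex_of_real (cos_transform x)))^2)"
  proof (rule fourier_square_integrable)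
    show "integrable lborel (\<lambda>z. complex_of_real (H z))"
      by (rule integrable_of_real[OF integrable_symbol])
    show "integrable lborel (\<lambda>z. (cmod (complex_of_real (H z)))^2)"
      using integrable_symbol_square by simp
    show "complex_of_real (cos_transform x) = (\<integral>z. complex_of_real (H z) * cis (2*pi*x*z) \<partial>lborel)" for x
      by (rule fourier_symbol[symmetric])
  qed measurable
  then show ?thesis
    by simp
qed

definition smoothed_symbol :: "nat \<Rightarrow> real \<Rightarrow> real" where
  "smoothed_symbol k \<xi> = (\<integral>\<eta>. H \<eta> * gauss_kernel (Suc k) (\<xi> + \<eta>) \<partial>lborel)"

lemma borel_measurable_smoothed_symbol[measurable]: "smoothed_symbol k \<in> borel_measurable borel"
  unfolding smoothed_symbol_def[abs_def] by (rule lborel.borel_measurable_lebesgue_integral) simp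

lemma smoothed_symbol_bound: "\<bar>smoothed_symbol k \<xi>\<bar> \<le> B"
proof -
  have kernel: "integrable lborel (\<lambda>\<eta>. B * gauss_kernel (Suc k) (\<xi> + \<eta>))"
    using integrable_gauss_kernel[of "Suc k" "-\<xi>"] by (simp add: add.commute)
  have pointwise: "\<bar>H \<eta> * gauss_kernel (Suc k) (\<xi> + \<eta>)\<bar> \<le> B * gauss_kernel (Suc k) (\<xi> + \<eta>)" for \<eta>
    using symbol_bound gauss_kernel_pos[of "Suc k" "\<xi> + \<eta>"]
    by (simp add: abs_mult mult_right_mono)
  have kernel_abs: "\<bar>B * gauss_kernel (Suc k) (\<xi> + \<eta>)\<bar> = B * gauss_kernel (Suc k) (\<xi> + \<eta>)" for \<eta>
    using symbol_bound_nonneg gauss_kernel_pos[of "Suc k" "\<xi> + \<eta>"] by simp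
  have "\<bar>smoothed_symbol k \<xi>\<bar> \<le> (\<integral>\<eta>. B * gauss_kernel (Suc k) (\<xi> + \<eta>) \<partial>lborel)"
    unfolding smoothed_symbol_def
    by (rule order_trans[OF integral_abs_bound integral_mono[OF _ kernel pointwise]])
       (rule Bochner_Integration.integrable_bound[OF kernel]; use pointwise kernel_abs in \<open>auto intro!: AE_I2\<close>)
  also have "\<dots> = B"
    using integral_gauss_kernel[of "Suc k" "-\<xi>"] by (simp add: add.commute)
  finally show ?thesis .
qed

lemma smoothed_symbol_tendsto:
  assumes "\<bar>\<xi>\<bar> \<noteq> a"
  shows "(\<lambda>k. smoothed_symbol k \<xi>) \<longlonglongrightarrow> H \<xi>"
proof -
  have "(\<lambda>k. \<integral>z. gauss_kernel (Suc k) (-\<xi> - z) *\<^sub>R H z \<partial>lborel) \<longlonglongrightarrow> H (-\<xi>)"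
    using assms symbol_bound by (intro gauss_kernel_approx_identity isCont_symbol) auto
  moreover have "gauss_kernel (Suc k) (-\<xi> - z) = gauss_kernel (Suc k) (\<xi> + z)" for k z
    using gauss_kernel_minus[of "Suc k" "\<xi> + z"] by simp
  ultimately show ?thesis
    by (simp add: smoothed_symbol_def symbol_even mult.commute)
qed

lemma integrable_cutoff_cos_transform:
  assumes [measurable]: "h \<in> borel_measurable borel" and h: "\<And>x. cmod (h x) \<le> 1"
  shows "integrable lborel (\<lambda>x. complex_of_real (gauss_cutoff (Suc k) x * cos_transform x) * h x)"
proof -
  let ?C = "\<integral>z. \<bar>H z\<bar> \<partial>lborel"
  have "cmod (complex_of_real (cos_transform x) * h x) \<le> ?C" for x
    using mult_mono[OF cos_transform_bound h order_trans[OF abs_ge_zero cos_transform_bound]]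
    by (simp add: norm_mult)
  then have "integrable lborel (\<lambda>x. complex_of_real (gauss_cutoff (Suc k) x) * (complex_of_real (cos_transform x) * h x))"
    by (intro integrable_gauss_cutoff_mult) auto
  then show ?thesis
    by (simp add: mult.assoc)
qed

lemma fourier_cutoff_cos_transform:
  "(\<integral>x. complex_of_real (gauss_cutoff (Suc k) x * cos_transform x) * cis (2*pi*x*\<xi>) \<partial>lborel)
     = complex_of_real (smoothed_symbol k \<xi>)"
proof -
  have cutoff: "integrable lborel (\<lambda>x. complex_of_real (gauss_cutoff (Suc k) x) * cis (2*pi*x*\<xi>))"
    by (rule integrable_gauss_cutoff_mult[where C=1]) auto
  have "(\<integral>x. complex_of_real (gauss_cutoff (Suc k) x * cos_transform x) * cis (2*pi*x*\<xi>) \<partial>lborel)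
      = (\<integral>x. (complex_of_real (gauss_cutoff (Suc k) x) * cis (2*pi*x*\<xi>))
              * (\<integral>z. complex_of_real (H z) * cis (2*pi*x*z) \<partial>lborel) \<partial>lborel)"
    unfolding fourier_symbol by (simp add: mult_ac)
  also have "\<dots> = (\<integral>z. complex_of_real (H z)
      * (\<integral>x. (complex_of_real (gauss_cutoff (Suc k) x) * cis (2*pi*x*\<xi>)) * cis (2*pi*x*z) \<partial>lborel) \<partial>lborel)"
    by (rule fourier_multiplication_formula[OF cutoff integrable_of_real[OF integrable_symbol]])
  also have "\<dots> = (\<integral>z. complex_of_real (H z * gauss_kernel (Suc k) (\<xi> + z)) \<partial>lborel)"
  proof (intro Bochner_Integration.integral_cong refl)
    fix z
    have "(\<integral>x. (complex_of_real (gauss_cutoff (Suc k) x) * cis (2*pi*x*\<xi>)) * cis (2*pi*x*z) \<partial>lborel)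
        = (\<integral>x. complex_of_real (gauss_cutoff (Suc k) x) * cis (2*pi*x*(\<xi> + z)) \<partial>lborel)"
      by (simp add: mult.assoc cis_mult distrib_left)
    also have "\<dots> = complex_of_real (gauss_kernel (Suc k) (\<xi> + z))"
      by (rule fourier_gauss_cutoff) simp
    finally show "complex_of_real (H z)
        * (\<integral>x. (complex_of_real (gauss_cutoff (Suc k) x) * cis (2*pi*x*\<xi>)) * cis (2*pi*x*z) \<partial>lborel)
        = complex_of_real (H z * gauss_kernel (Suc k) (\<xi> + z))"
      by simp
  qed
  also have "\<dots> = complex_of_real (smoothed_symbol k \<xi>)"
    unfolding smoothed_symbol_def by (rule integral_complex_of_real)
  finally show ?thesis .
qed

lemma fourier_cutoff_cos_transform_sinc_square:
  "(\<integral>x. complex_of_real (gauss_cutoff (Suc k) x * cos_transform x) * cis (2*pi*x*\<xi>) * complex_of_real ((sinc x)^2) \<partial>lborel)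
     = complex_of_real (\<integral>z. tent z * smoothed_symbol k (\<xi> + z) \<partial>lborel)"
proof -
  have phi: "integrable lborel (\<lambda>x. complex_of_real (gauss_cutoff (Suc k) x * cos_transform x) * cis (2*pi*x*\<xi>))"
    by (rule integrable_cutoff_cos_transform) auto
  have "(\<integral>x. complex_of_real (gauss_cutoff (Suc k) x * cos_transform x) * cis (2*pi*x*\<xi>) * complex_of_real ((sinc x)^2) \<partial>lborel)
      = (\<integral>x. complex_of_real (gauss_cutoff (Suc k) x * cos_transform x) * cis (2*pi*x*\<xi>)
              * (\<integral>z. complex_of_real (tent z) * cis (2*pi*x*z) \<partial>lborel) \<partial>lborel)"
    by (simp only: sinc_square_fourier)
  also have "\<dots> = (\<integral>z. complex_of_real (tent z)
      * (\<integral>x. complex_of_real (gauss_cutoff (Suc k) x * cos_transform x) * cis (2*pi*x*\<xi>) * cis (2*pi*x*z) \<partial>lborel) \<partial>lborel)"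
    by (rule fourier_multiplication_formula[OF phi integrable_of_real[OF integrable_tent]])
  also have "\<dots> = (\<integral>z. complex_of_real (tent z * smoothed_symbol k (\<xi> + z)) \<partial>lborel)"
  proof (intro Bochner_Integration.integral_cong refl)
    fix z
    have "cis (2*pi*x*\<xi>) * cis (2*pi*x*z) = cis (2*pi*x*(\<xi> + z))" for x
      by (simp add: cis_mult distrib_left)
    then have "(\<integral>x. complex_of_real (gauss_cutoff (Suc k) x * cos_transform x) * cis (2*pi*x*\<xi>) * cis (2*pi*x*z) \<partial>lborel)
        = complex_of_real (smoothed_symbol k (\<xi> + z))"
      by (simp only: mult.assoc fourier_cutoff_cos_transform[symmetric])
    then show "complex_of_real (tent z)
        * (\<integral>x. complex_of_real (gauss_cutoff (Suc k) x * cos_transform x) * cis (2*pi*x*\<xi>) * cis (2*pi*x*z) \<partial>lborel)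
        = complex_of_real (tent z * smoothed_symbol k (\<xi> + z))"
      by simp
  qed
  also have "\<dots> = complex_of_real (\<integral>z. tent z * smoothed_symbol k (\<xi> + z) \<partial>lborel)"
    by (rule integral_complex_of_real)
  finally show ?thesis .
qed

definition smoothed_multiplier :: "nat \<Rightarrow> real \<Rightarrow> real" where
  "smoothed_multiplier k \<xi> = smoothed_symbol k \<xi> - (\<integral>z. tent z * smoothed_symbol k (\<xi> + z) \<partial>lborel)"

lemma borel_measurable_smoothed_multiplier[measurable]: "smoothed_multiplier k \<in> borel_measurable borel"
proof -
  have "(\<lambda>\<xi>. \<integral>z. tent z * smoothed_symbol k (\<xi> + z) \<partial>lborel) \<in> borel_measurable borel"
    by (rule lborel.borel_measurable_lebesgue_integral) simp
  then show ?thesis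
    unfolding smoothed_multiplier_def[abs_def] by simp
qed

lemma fourier_cutoff_weighted_cos_transform:
  "(\<integral>x. complex_of_real (gauss_cutoff (Suc k) x * cos_transform x * (1 - (sinc x)^2)) * cis (2*pi*x*\<xi>) \<partial>lborel)
     = complex_of_real (smoothed_multiplier k \<xi>)"
proof -
  let ?A = "\<lambda>x. complex_of_real (gauss_cutoff (Suc k) x * cos_transform x) * cis (2*pi*x*\<xi>)"
  have "integrable lborel ?A"
    by (rule integrable_cutoff_cos_transform) auto
  moreover have "integrable lborel (\<lambda>x. ?A x * complex_of_real ((sinc x)^2))"
    unfolding mult.assoc
    by (rule integrable_cutoff_cos_transform)
       (auto simp: norm_mult abs_square_le_1 sinc_abs_le_1 simp del: of_real_power)
  ultimately have "(\<integral>x. ?A x - ?A x * complex_of_real ((sinc x)^2) \<partial>lborel)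
      = (\<integral>x. ?A x \<partial>lborel) - (\<integral>x. ?A x * complex_of_real ((sinc x)^2) \<partial>lborel)"
    by (rule Bochner_Integration.integral_diff)
  also have "\<dots> = complex_of_real (smoothed_multiplier k \<xi>)"
    by (simp only: fourier_cutoff_cos_transform fourier_cutoff_cos_transform_sinc_square
        smoothed_multiplier_def of_real_diff)
  finally show ?thesis
    by (simp add: algebra_simps)
qed

lemma smoothed_multiplier_bound: "\<bar>smoothed_multiplier k \<xi>\<bar> \<le> 2 * B"
proof -
  have pointwise: "\<bar>tent z * smoothed_symbol k (\<xi> + z)\<bar> \<le> B * tent z" for z
    using mult_left_mono[OF smoothed_symbol_bound tent_nonneg]
    by (simp add: abs_mult tent_nonneg mult.commute)
  have int: "integrable lborel (\<lambda>z. tent z * smoothed_symbol k (\<xi> + z))"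
    by (rule Bochner_Integration.integrable_bound[where f="\<lambda>z. B * tent z"])
       (use pointwise integrable_tent symbol_bound_nonneg tent_nonneg in \<open>auto intro!: AE_I2\<close>)
  have "\<bar>\<integral>z. tent z * smoothed_symbol k (\<xi> + z) \<partial>lborel\<bar> \<le> (\<integral>z. B * tent z \<partial>lborel)"
    using int integrable_tent pointwise
    by (intro order_trans[OF integral_abs_bound integral_mono]) auto
  also have "\<dots> = B"
    by (simp add: integral_tent)
  finally show ?thesis
    using smoothed_symbol_bound[of k \<xi>] unfolding smoothed_multiplier_def by linarith
qed

lemma smoothed_multiplier_tendsto:
  assumes "\<bar>\<xi>\<bar> \<noteq> a"
  shows "(\<lambda>k. smoothed_multiplier k \<xi>) \<longlonglongrightarrow> H \<xi> - (\<integral>z. tent z * H (\<xi> + z) \<partial>lborel)"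
  unfolding smoothed_multiplier_def
proof (intro tendsto_diff smoothed_symbol_tendsto[OF assms])
  show "(\<lambda>k. \<integral>z. tent z * smoothed_symbol k (\<xi> + z) \<partial>lborel) \<longlonglongrightarrow> (\<integral>z. tent z * H (\<xi> + z) \<partial>lborel)"
  proof (rule integral_dominated_convergence[where w="\<lambda>z. B * tent z"])
    show "AE z in lborel. (\<lambda>k. tent z * smoothed_symbol k (\<xi> + z)) \<longlonglongrightarrow> tent z * H (\<xi> + z)"
      using AE_lborel_singleton[of "a - \<xi>"] AE_lborel_singleton[of "-a - \<xi>"]
      by eventually_elim
         (auto intro!: tendsto_mult tendsto_const smoothed_symbol_tendsto simp: abs_if split: if_splits)
    show "AE z in lborel. norm (tent z * smoothed_symbol k (\<xi> + z)) \<le> B * tent z" for k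
      using mult_left_mono[OF smoothed_symbol_bound tent_nonneg]
      by (intro AE_I2) (simp add: abs_mult tent_nonneg mult.commute)
  qed (use integrable_tent in auto)
qed

end

locale reproducing_symbol = bounded_even_symbol +
  assumes symbol_convolution: "\<And>\<xi>. \<bar>\<xi>\<bar> < a \<Longrightarrow> H \<xi> - (\<integral>z. tent z * H (\<xi> - z) \<partial>lborel) = 1"
begin

lemma smoothed_multiplier_tendsto_1:
  assumes "\<bar>\<xi>\<bar> < a"
  shows "(\<lambda>k. smoothed_multiplier k \<xi>) \<longlonglongrightarrow> 1"
proof -
  have "H (-\<xi> - z) = H (\<xi> + z)" for z
    using symbol_even[of "\<xi> + z"] by simp
  then have "H \<xi> - (\<integral>z. tent z * H (\<xi> + z) \<partial>lborel) = 1"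
    using symbol_convolution[of "-\<xi>"] assms by (simp add: symbol_even)
  then show ?thesis
    using smoothed_multiplier_tendsto[of \<xi>] assms by simp
qed

context
  fixes g f :: "real \<Rightarrow> complex"
  assumes g_measurable[measurable]: "g \<in> borel_measurable borel"
    and g_integrable: "integrable lborel g"
    and g_square_integrable: "integrable lborel (\<lambda>\<xi>. (cmod (g \<xi>))^2)"
    and g_vanish: "\<And>\<xi>. \<xi> \<notin> {-a..a} \<Longrightarrow> g \<xi> = 0"
    and f_fourier: "\<And>x. f x = (\<integral>\<xi>. g \<xi> * cis (2*pi*x*\<xi>) \<partial>lborel)"
begin

lemma weight_bounds: "0 \<le> 1 - (sinc x)^2" "1 - (sinc x)^2 \<le> 1"
  using sinc_abs_le_1[of x] by (auto simp: abs_square_le_1)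

lemma integrable_pairing: "integrable lborel (\<lambda>x. f x * complex_of_real (cos_transform x * (1 - (sinc x)^2)))"
proof -
  note borel_measurable_fourier[OF g_measurable g_integrable g_square_integrable f_fourier, measurable]
  show ?thesis
  proof (rule Bochner_Integration.integrable_bound[where f="\<lambda>x. ((cmod (f x))^2 + (cos_transform x)^2) / 2"])
    show "integrable lborel (\<lambda>x. ((cmod (f x))^2 + (cos_transform x)^2) / 2)"
      using fourier_square_integrable[OF g_measurable g_integrable g_square_integrable f_fourier]
        integrable_cos_transform_square by simp
    show "AE x in lborel. norm (f x * complex_of_real (cos_transform x * (1 - (sinc x)^2)))
        \<le> norm (((cmod (f x))^2 + (cos_transform x)^2) / 2)"
    proof (intro AE_I2)
      fix x
      have "norm (f x * complex_of_real (cos_transform x * (1 - (sinc x)^2)))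
          = cmod (f x) * (\<bar>cos_transform x\<bar> * (1 - (sinc x)^2))"
        using weight_bounds[of x] by (simp only: norm_mult norm_of_real abs_mult abs_of_nonneg)
      also have "\<dots> \<le> cmod (f x) * \<bar>cos_transform x\<bar>"
        using weight_bounds[of x] by (intro mult_left_mono mult_left_le) auto
      also have "\<dots> \<le> ((cmod (f x))^2 + (cos_transform x)^2) / 2"
        using sum_squares_bound[of "cmod (f x)" "\<bar>cos_transform x\<bar>"] by (simp add: power2_eq_square)
      also have "\<dots> = norm (((cmod (f x))^2 + (cos_transform x)^2) / 2)"
        by simp
      finally show "norm (f x * complex_of_real (cos_transform x * (1 - (sinc x)^2)))
          \<le> norm (((cmod (f x))^2 + (cos_transform x)^2) / 2)" .
    qed
  qed measurable
qed

lemma pairing_cutoff: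
  "(\<integral>x. f x * complex_of_real (gauss_cutoff (Suc k) x * cos_transform x * (1 - (sinc x)^2)) \<partial>lborel)
     = (\<integral>\<xi>. g \<xi> * complex_of_real (smoothed_multiplier k \<xi>) \<partial>lborel)"
proof -
  have "integrable lborel (\<lambda>x. complex_of_real (gauss_cutoff (Suc k) x * cos_transform x) * complex_of_real (1 - (sinc x)^2))"
  proof (rule integrable_cutoff_cos_transform)
    show "cmod (complex_of_real (1 - (sinc x)^2)) \<le> 1" for x
      using weight_bounds[of x] by (simp only: norm_of_real abs_of_nonneg)
  qed measurable
  then have phi: "integrable lborel (\<lambda>x. complex_of_real (gauss_cutoff (Suc k) x * cos_transform x * (1 - (sinc x)^2)))"
    by (simp only: of_real_mult)
  have "(\<integral>x. f x * complex_of_real (gauss_cutoff (Suc k) x * cos_transform x * (1 - (sinc x)^2)) \<partial>lborel)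
      = (\<integral>x. complex_of_real (gauss_cutoff (Suc k) x * cos_transform x * (1 - (sinc x)^2))
              * (\<integral>\<xi>. g \<xi> * cis (2*pi*x*\<xi>) \<partial>lborel) \<partial>lborel)"
    by (simp add: f_fourier mult.commute)
  also have "\<dots> = (\<integral>\<xi>. g \<xi> * (\<integral>x. complex_of_real (gauss_cutoff (Suc k) x * cos_transform x * (1 - (sinc x)^2))
              * cis (2*pi*x*\<xi>) \<partial>lborel) \<partial>lborel)"
    by (rule fourier_multiplication_formula[OF phi g_integrable])
  also have "\<dots> = (\<integral>\<xi>. g \<xi> * complex_of_real (smoothed_multiplier k \<xi>) \<partial>lborel)"
    by (simp only: fourier_cutoff_weighted_cos_transform)
  finally show ?thesis .
qed

lemma pairing_cutoff_tendsto:
  "(\<lambda>k. \<integral>x. f x * complex_of_real (gauss_cutoff (Suc k) x * cos_transform x * (1 - (sinc x)^2)) \<partial>lborel)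
      \<longlonglongrightarrow> (\<integral>x. f x * complex_of_real (cos_transform x * (1 - (sinc x)^2)) \<partial>lborel)"
proof -
  note borel_measurable_fourier[OF g_measurable g_integrable g_square_integrable f_fourier, measurable]
  show ?thesis
  proof (rule integral_dominated_convergence
      [where w="\<lambda>x. norm (f x * complex_of_real (cos_transform x * (1 - (sinc x)^2)))"])
    show "AE x in lborel. (\<lambda>k. f x * complex_of_real (gauss_cutoff (Suc k) x * cos_transform x * (1 - (sinc x)^2)))
        \<longlonglongrightarrow> f x * complex_of_real (cos_transform x * (1 - (sinc x)^2))"
    proof (intro AE_I2 tendsto_mult[OF tendsto_const] tendsto_of_real)
      fix x
      have "(\<lambda>k. gauss_cutoff (Suc k) x * cos_transform x * (1 - (sinc x)^2))
          \<longlonglongrightarrow> 1 * cos_transform x * (1 - (sinc x)^2)"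
        by (intro tendsto_mult tendsto_const gauss_cutoff_tendsto_1)
      then show "(\<lambda>k. gauss_cutoff (Suc k) x * cos_transform x * (1 - (sinc x)^2))
          \<longlonglongrightarrow> cos_transform x * (1 - (sinc x)^2)"
        by simp
    qed
    show "AE x in lborel. norm (f x * complex_of_real (gauss_cutoff (Suc k) x * cos_transform x * (1 - (sinc x)^2)))
        \<le> norm (f x * complex_of_real (cos_transform x * (1 - (sinc x)^2)))" for k
    proof (intro AE_I2)
      fix x
      let ?c = "cos_transform x * (1 - (sinc x)^2)"
      have "cmod (f x) * (gauss_cutoff (Suc k) x * \<bar>?c\<bar>) \<le> cmod (f x) * \<bar>?c\<bar>"
        by (intro mult_left_mono mult_left_le_one_le) (auto simp: gauss_cutoff_le_1 less_imp_le[OF gauss_cutoff_pos])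
      then show "norm (f x * complex_of_real (gauss_cutoff (Suc k) x * cos_transform x * (1 - (sinc x)^2)))
          \<le> norm (f x * complex_of_real ?c)"
        by (simp only: norm_mult norm_of_real mult.assoc abs_mult[of "gauss_cutoff (Suc k) x"]
            abs_of_pos[OF gauss_cutoff_pos])
    qed
  qed (use integrable_pairing in auto)
qed

lemma integral_smoothed_multiplier_tendsto:
  "(\<lambda>k. \<integral>\<xi>. g \<xi> * complex_of_real (smoothed_multiplier k \<xi>) \<partial>lborel) \<longlonglongrightarrow> (\<integral>\<xi>. g \<xi> \<partial>lborel)"
proof (rule integral_dominated_convergence[where w="\<lambda>\<xi>. 2 * B * norm (g \<xi>)"])
  show "AE \<xi> in lborel. (\<lambda>k. g \<xi> * complex_of_real (smoothed_multiplier k \<xi>)) \<longlonglongrightarrow> g \<xi>"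
    using AE_lborel_singleton[of a] AE_lborel_singleton[of "-a"]
  proof eventually_elim
    fix \<xi> :: real
    assume "\<xi> \<noteq> a" "\<xi> \<noteq> -a"
    then consider "\<bar>\<xi>\<bar> < a" | "\<xi> \<notin> {-a..a}"
      by fastforce
    then show "(\<lambda>k. g \<xi> * complex_of_real (smoothed_multiplier k \<xi>)) \<longlonglongrightarrow> g \<xi>"
    proof cases
      case 1
      then have "(\<lambda>k. g \<xi> * complex_of_real (smoothed_multiplier k \<xi>)) \<longlonglongrightarrow> g \<xi> * complex_of_real 1"
        by (intro tendsto_mult tendsto_const tendsto_of_real smoothed_multiplier_tendsto_1)
      then show ?thesis
        by simp
    qed (simp add: g_vanish)
  qed
  show "AE \<xi> in lborel. norm (g \<xi> * complex_of_real (smoothed_multiplier k \<xi>)) \<le> 2 * B * norm (g \<xi>)" for k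
    using smoothed_multiplier_bound[of k]
    by (intro AE_I2) (simp add: norm_mult mult.commute mult_left_mono)
qed (use g_integrable in auto)

lemma pairing_eq_integral:
  "(\<integral>x. f x * complex_of_real (cos_transform x * (1 - (sinc x)^2)) \<partial>lborel) = (\<integral>\<xi>. g \<xi> \<partial>lborel)"
  using pairing_cutoff_tendsto integral_smoothed_multiplier_tendsto
  unfolding pairing_cutoff by (rule LIMSEQ_unique)

end

theorem reproducing_at_0:
  assumes "F \<in> PW a"
  shows "F 0 = (\<integral>x. F (complex_of_real x) * complex_of_real (cos_transform x * (1 - (sinc x)^2)) \<partial>lborel)"
proof -
  obtain g where g: "g \<in> borel_measurable borel" "integrable lborel g" "integrable lborel (\<lambda>z. (cmod (g z))^2)"
      "\<And>z. z \<notin> {-a..a} \<Longrightarrow> g z = 0" and F: "\<And>x. F (complex_of_real x) = (\<integral>z. g z * cis (2*pi*x*z) \<partial>lborel)"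
    using PW_fourier_representation[OF assms] by blast
  show ?thesis
    using pairing_eq_integral[OF g F] F[of 0] by simp
qed

end

section \<open>The symbol of the kernel\<close>

definition kernel_denom :: "real \<Rightarrow> real" where
  "kernel_denom m = - sqrt 2 * sin (pi * u_m m) + pi * u_m m * sin (pi * u_m m) + cos (pi * u_m m)"

definition kernel_symbol :: "real \<Rightarrow> real \<Rightarrow> real" where
  "kernel_symbol m z = indicator {-(1/(2*m))..1/(2*m)} z * (cos (sqrt 2 * z) / kernel_denom m)"

lemma pi_u_m: "pi * u_m m = 1 / (sqrt 2 * m)"
  by (simp add: u_m_def)

lemma kernel_denom_pos:
  assumes m: "m \<ge> 1"
  shows "kernel_denom m > 0"
proof -
  define t where "t = 1 / (sqrt 2 * m)"
  have t: "t > 0" "t * sqrt 2 \<le> 1"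
    using m by (auto simp: t_def field_simps)
  then have "t \<le> 1" "t < sqrt 2"
    by (smt (verit) mult_le_cancel_left1 real_sqrt_ge_one real_sqrt_gt_1_iff)+
  then have "(sqrt 2 - t) * sin t \<le> (sqrt 2 - t) * t"
    using t by (intro mult_left_mono sin_x_le_x) auto
  moreover have "1 - t^2/2 \<le> cos t"
  proof -
    have "(sin (t/2))^2 \<le> (t/2)^2"
      using abs_sin_x_le_abs_x[of "t/2"] by (metis abs_le_square_iff)
    then show ?thesis
      using cos_double_sin[of "t/2"] by (simp add: power_divide)
  qed
  ultimately have "kernel_denom m \<ge> (1 - t * sqrt 2 / 2)^2"
    unfolding kernel_denom_def pi_u_m t_def[symmetric] by (simp add: power2_eq_square algebra_simps)
  moreover have "(1 - t * sqrt 2 / 2)^2 > 0"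
    using t by simp
  ultimately show ?thesis
    by linarith
qed

lemma continuous_on_kernel_symbol_cos: "continuous_on S (\<lambda>z. cos (sqrt 2 * z) / kernel_denom m)"
  unfolding divide_inverse by (intro continuous_intros)

lemma bounded_even_symbol_kernel_symbol:
  "bounded_even_symbol (kernel_symbol m) (1/(2*m)) (1 / \<bar>kernel_denom m\<bar>)"
proof
  show "kernel_symbol m \<in> borel_measurable borel"
    unfolding kernel_symbol_def[abs_def]
    by (intro borel_measurable_times borel_measurable_indicator borel_measurable_continuous_onI
        continuous_on_kernel_symbol_cos) auto
  show "\<bar>kernel_symbol m z\<bar> \<le> 1 / \<bar>kernel_denom m\<bar>" for z
    by (simp add: kernel_symbol_def indicator_def abs_divide divide_right_mono)
  show "z \<notin> {-(1/(2*m))..1/(2*m)} \<Longrightarrow> kernel_symbol m z = 0" for z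
    by (simp add: kernel_symbol_def)
  show "kernel_symbol m (-z) = kernel_symbol m z" for z
    by (auto simp: kernel_symbol_def indicator_def)
  show "isCont (kernel_symbol m) z" if "\<bar>z\<bar> \<noteq> 1/(2*m)" for z
  proof -
    let ?I = "{-(1/(2*m))<..<1/(2*m)}" and ?O = "{z. \<bar>z\<bar> > 1/(2*m)}"
    have "continuous_on ?I (kernel_symbol m)"
      by (rule continuous_on_eq[OF continuous_on_kernel_symbol_cos[of _ m]]) (simp add: kernel_symbol_def)
    moreover have "continuous_on ?O (kernel_symbol m)"
      by (rule continuous_on_eq[OF continuous_on_const]) (auto simp: kernel_symbol_def indicator_def)
    moreover have "open ?I" "open ?O"
      by (auto intro!: open_Collect_less continuous_intros)
    moreover have "z \<in> ?I \<or> z \<in> ?O"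
      using that by auto
    ultimately show ?thesis
      using continuous_on_eq_continuous_at by blast
  qed
qed

lemma integral_kernel_symbol_cos:
  assumes m: "m > 0"
  shows "(\<integral>z. kernel_symbol m z * cos (2*pi*x*z) \<partial>lborel) = s_plus (u_m m) (x/m) / (m * kernel_denom m)"
proof -
  define a where "a = 1/(2*m)"
  define P where "P z = (sin_prim (sqrt 2 + 2*pi*x) z + sin_prim (sqrt 2 - 2*pi*x) z) / (2 * kernel_denom m)" for z
  have "(\<integral>z. kernel_symbol m z * cos (2*pi*x*z) \<partial>lborel)
      = (\<integral>z. indicator {-a..a} z * (cos (sqrt 2 * z) / kernel_denom m * cos (2*pi*x*z)) \<partial>lborel)"
    by (simp add: kernel_symbol_def a_def mult.assoc)
  also have "\<dots> = P a - P (-a)"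
  proof (rule lborel_integral_FTC)
    show "-a \<le> a"
      using m by (simp add: a_def)
    have "(P has_real_derivative (cos ((sqrt 2 + 2*pi*x)*z) + cos ((sqrt 2 - 2*pi*x)*z)) / (2 * kernel_denom m)) (at z)" for z
      unfolding P_def[abs_def] by (intro DERIV_cdivide DERIV_add sin_prim_has_derivative)
    moreover have "(cos ((sqrt 2 + 2*pi*x)*z) + cos ((sqrt 2 - 2*pi*x)*z)) / (2 * kernel_denom m)
        = cos (sqrt 2 * z) / kernel_denom m * cos (2*pi*x*z)" for z
      by (simp add: distrib_right left_diff_distrib cos_add cos_diff)
    ultimately show "(P has_real_derivative cos (sqrt 2 * z) / kernel_denom m * cos (2*pi*x*z)) (at z)" for z
      by simp
  qed (unfold divide_inverse, intro continuous_intros)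
  also have "P a - P (-a) = (sin_prim (sqrt 2 + 2*pi*x) a + sin_prim (sqrt 2 - 2*pi*x) a) / kernel_denom m"
    by (cases "kernel_denom m = 0") (simp_all add: P_def sin_prim_minus field_simps)
  also have "\<dots> = s_plus (u_m m) (x/m) / (m * kernel_denom m)"
  proof -
    have u: "u_m m = sqrt 2 / (2*pi*m)"
      using m by (simp add: u_m_def field_simps)
    have e1: "sin_prim (sqrt 2 + 2*pi*x) a = a * sinc (u_m m + x/m)"
      and e2: "sin_prim (sqrt 2 - 2*pi*x) a = a * sinc (u_m m - x/m)"
      using m by (auto simp: sin_prim_eq_sinc a_def u field_simps)
    show ?thesis
      unfolding e1 e2 unfolding s_plus_def a_def using m
      by (cases "kernel_denom m = 0") (simp_all add: field_simps)
  qed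
  finally show ?thesis .
qed

lemma integral_tent_kernel_symbol_reflect:
  assumes m: "m \<ge> 1" and \<xi>: "\<bar>\<xi>\<bar> < 1/(2*m)"
  shows "(\<integral>z. tent z * kernel_symbol m (\<xi> - z) \<partial>lborel)
       = (\<integral>y. indicator {-(1/(2*m))..1/(2*m)} y * (cos (sqrt 2 * y) / kernel_denom m * (1 - \<bar>\<xi> - y\<bar>)) \<partial>lborel)"
proof -
  have "\<bar>\<xi> - y\<bar> \<le> 1" if "y \<in> {-(1/(2*m))..1/(2*m)}" for y
  proof -
    have "1/(2*m) \<le> 1/2"
      using m by (simp add: field_simps)
    then show ?thesis
      using that \<xi> by (auto simp: abs_le_iff abs_less_iff)
  qed
  then have pointwise: "tent (\<xi> + (-1) * y) * kernel_symbol m (\<xi> - (\<xi> + (-1) * y))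
      = indicator {-(1/(2*m))..1/(2*m)} y * (cos (sqrt 2 * y) / kernel_denom m * (1 - \<bar>\<xi> - y\<bar>))" for y
    by (auto simp: kernel_symbol_def tent_def indicator_def)
  have "(\<integral>z. tent z * kernel_symbol m (\<xi> - z) \<partial>lborel)
      = \<bar>-1\<bar> *\<^sub>R (\<integral>y. tent (\<xi> + (-1) * y) * kernel_symbol m (\<xi> - (\<xi> + (-1) * y)) \<partial>lborel)"
    by (rule lborel_integral_real_affine) simp
  then show ?thesis
    unfolding pointwise by simp
qed

lemma integral_tent_kernel_symbol:
  assumes m: "m \<ge> 1" and \<xi>: "\<bar>\<xi>\<bar> < 1/(2*m)"
  shows "(\<integral>z. tent z * kernel_symbol m (\<xi> - z) \<partial>lborel) = (cos (sqrt 2 * \<xi>) - kernel_denom m) / kernel_denom m"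
proof -
  define a c D where "a = 1/(2*m)" and "c = sqrt 2" and "D = kernel_denom m"
  have c: "c * c = 2" "c > 0" and D: "D > 0"
    using kernel_denom_pos[OF m] by (auto simp: c_def D_def)
  have \<xi>a: "\<bar>\<xi>\<bar> < a"
    using \<xi> by (simp add: a_def)
  define P1 where "P1 y = ((1 - \<xi> + y) * sin (c*y) / c + cos (c*y) / (c*c)) / D" for y
  define P2 where "P2 y = ((1 + \<xi> - y) * sin (c*y) / c - cos (c*y) / (c*c)) / D" for y
  have "(\<integral>z. tent z * kernel_symbol m (\<xi> - z) \<partial>lborel)
      = (\<integral>y. indicator {-a..a} y * (cos (c*y) / D * (1 - \<bar>\<xi> - y\<bar>)) \<partial>lborel)"
    unfolding a_def c_def D_def by (rule integral_tent_kernel_symbol_reflect[OF m \<xi>])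
  also have "\<dots> = (\<integral>y. indicator {-a..\<xi>} y * (cos (c*y) / D * (1 - \<bar>\<xi> - y\<bar>)) \<partial>lborel)
                 + (\<integral>y. indicator {\<xi>..a} y * (cos (c*y) / D * (1 - \<bar>\<xi> - y\<bar>)) \<partial>lborel)"
    using \<xi>a unfolding divide_inverse by (intro lborel_integral_split) (auto intro!: continuous_intros)
  also have "(\<integral>y. indicator {-a..\<xi>} y * (cos (c*y) / D * (1 - \<bar>\<xi> - y\<bar>)) \<partial>lborel)
      = (\<integral>y. indicator {-a..\<xi>} y * (cos (c*y) / D * (1 - \<xi> + y)) \<partial>lborel)"
    by (intro Bochner_Integration.integral_cong refl) (auto simp: indicator_def)
  also have "\<dots> = P1 \<xi> - P1 (-a)"
  proof (rule lborel_integral_FTC)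
    show "(P1 has_real_derivative cos (c*y) / D * (1 - \<xi> + y)) (at y)" for y
      unfolding P1_def[abs_def] using c D by (auto intro!: derivative_eq_intros simp: field_simps)
  qed (use \<xi>a in \<open>auto simp: divide_inverse intro!: continuous_intros\<close>)
  also have "(\<integral>y. indicator {\<xi>..a} y * (cos (c*y) / D * (1 - \<bar>\<xi> - y\<bar>)) \<partial>lborel)
      = (\<integral>y. indicator {\<xi>..a} y * (cos (c*y) / D * (1 + \<xi> - y)) \<partial>lborel)"
    by (intro Bochner_Integration.integral_cong refl) (auto simp: indicator_def)
  also have "\<dots> = P2 a - P2 \<xi>"
  proof (rule lborel_integral_FTC)
    show "(P2 has_real_derivative cos (c*y) / D * (1 + \<xi> - y)) (at y)" for y
      unfolding P2_def[abs_def] using c D by (auto intro!: derivative_eq_intros simp: field_simps)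
  qed (use \<xi>a in \<open>auto simp: divide_inverse intro!: continuous_intros\<close>)
  also have "P1 \<xi> - P1 (-a) + (P2 a - P2 \<xi>) = (P1 \<xi> - P2 \<xi>) + (P2 a - P1 (-a))"
    by simp
  also have "P1 \<xi> - P2 \<xi> = cos (c*\<xi>) / D"
    using c D by (simp add: P1_def P2_def field_simps)
  also have "P2 a - P1 (-a) = ((2 - 2*a) / c * sin (c*a) - cos (c*a)) / D"
    using c D by (simp add: P1_def P2_def field_simps)
  also have "(2 - 2*a) / c = c - c*a"
    using c by (simp add: field_simps)
  also have "((c - c*a) * sin (c*a) - cos (c*a)) / D = -1"
  proof -
    have "c * a = pi * u_m m"
      using m by (simp add: pi_u_m a_def c_def field_simps)
    then have "D = - c * sin (c*a) + c*a * sin (c*a) + cos (c*a)"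
      by (simp add: D_def kernel_denom_def c_def)
    then show ?thesis
      using D by (simp add: field_simps)
  qed
  finally show ?thesis
    using D by (simp add: c_def D_def field_simps)
qed

lemma kernel_symbol_convolution:
  assumes "m \<ge> 1" and "\<bar>\<xi>\<bar> < 1/(2*m)"
  shows "kernel_symbol m \<xi> - (\<integral>z. tent z * kernel_symbol m (\<xi> - z) \<partial>lborel) = 1"
proof -
  have "\<xi> \<in> {-(1/(2*m))..1/(2*m)}"
    using assms(2) by (auto simp: abs_less_iff)
  then have "kernel_symbol m \<xi> = cos (sqrt 2 * \<xi>) / kernel_denom m"
    by (simp add: kernel_symbol_def)
  then show ?thesis
    using kernel_denom_pos[OF assms(1)]
    by (simp add: integral_tent_kernel_symbol[OF assms] diff_divide_distrib)
qed

lemma reproducing_symbol_kernel_symbol: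
  assumes "m \<ge> 1"
  shows "reproducing_symbol (kernel_symbol m) (1/(2*m)) (1 / \<bar>kernel_denom m\<bar>)"
  using assms bounded_even_symbol_kernel_symbol kernel_symbol_convolution
  by (simp add: reproducing_symbol_def reproducing_symbol_axioms_def)

section \<open>The reproducing kernel\<close>

lemma is_repr_kernel_eqI:
  assumes K: "is_repr_kernel a K" and G: "G \<in> PW a"
    and reproduces: "\<And>f. f \<in> PW a \<Longrightarrow>
      f 0 = (\<integral>x. f (complex_of_real x) * cnj (G (complex_of_real x)) * complex_of_real (1 - (sinc x)^2) \<partial>lborel)"
  shows "K 0 w = G w"
proof -
  define \<omega> where "\<omega> x = complex_of_real (1 - (sinc x)^2)" for x
  have K_PW: "\<And>z. K z \<in> PW a"
    and K_repr: "\<And>f z. f \<in> PW a \<Longrightarrow> f z = (\<integral>x. f (complex_of_real x) * cnj (K z (complex_of_real x)) * \<omega> x \<partial>lborel)"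
    using K unfolding is_repr_kernel_def \<omega>_def by auto
  have cnj_pairing: "cnj (\<integral>x. f (complex_of_real x) * cnj (h (complex_of_real x)) * \<omega> x \<partial>lborel)
      = (\<integral>x. h (complex_of_real x) * cnj (f (complex_of_real x)) * \<omega> x \<partial>lborel)" for f h :: "complex \<Rightarrow> complex"
    by (simp add: \<omega>_def mult_ac flip: Bochner_Integration.integral_cnj)
  have "K 0 w = cnj (K w 0)"
    using K_repr[OF K_PW, of 0 w] K_repr[OF K_PW, of w 0] cnj_pairing by simp
  also have "K w 0 = (\<integral>x. K w (complex_of_real x) * cnj (G (complex_of_real x)) * \<omega> x \<partial>lborel)"
    unfolding \<omega>_def by (rule reproduces[OF K_PW])
  also have "cnj \<dots> = G w"
    using K_repr[OF G, of w] cnj_pairing by simp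
  finally show ?thesis .
qed

definition kernel_candidate :: "real \<Rightarrow> complex \<Rightarrow> complex" where
  "kernel_candidate m w = set_lebesgue_integral lborel {-(1/(2*m))..1/(2*m)}
     (\<lambda>z. complex_of_real (cos (sqrt 2 * z) / kernel_denom m) * exp (2 * of_real pi * \<i> * w * of_real z))"

lemma kernel_candidate_PW: "kernel_candidate m \<in> PW (1/(2*m))"
  unfolding PW_def
proof (intro CollectI exI conjI allI)
  have "(\<lambda>z. complex_of_real (cos (sqrt 2 * z) / kernel_denom m)) \<in> borel_measurable borel"
    unfolding divide_inverse by (intro borel_measurable_continuous_onI continuous_intros)
  then show "(\<lambda>z. complex_of_real (cos (sqrt 2 * z) / kernel_denom m)) \<in> borel_measurable lborel"
    by simp
  show "set_integrable lborel {-(1/(2*m))..1/(2*m)} (\<lambda>z. (cmod (complex_of_real (cos (sqrt 2 * z) / kernel_denom m)))^2)"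
    unfolding set_integrable_def divide_inverse
    by (intro borel_integrable_compact continuous_intros) auto
qed (simp add: kernel_candidate_def)

lemma kernel_candidate_of_real:
  assumes "m > 0"
  shows "kernel_candidate m (complex_of_real x) = complex_of_real (s_plus (u_m m) (x/m) / (m * kernel_denom m))"
proof -
  interpret bounded_even_symbol "kernel_symbol m" "1/(2*m)" "1 / \<bar>kernel_denom m\<bar>"
    by (rule bounded_even_symbol_kernel_symbol)
  have "kernel_candidate m (complex_of_real x) = (\<integral>z. complex_of_real (kernel_symbol m z) * cis (2*pi*x*z) \<partial>lborel)"
    unfolding kernel_candidate_def set_lebesgue_integral_def kernel_symbol_def
    by (intro Bochner_Integration.integral_cong refl) (simp add: cis_conv_exp indicator_def mult_ac)
  also have "\<dots> = complex_of_real (s_plus (u_m m) (x/m) / (m * kernel_denom m))"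
    unfolding fourier_symbol cos_transform_def integral_kernel_symbol_cos[OF assms] ..
  finally show ?thesis .
qed

lemma kernel_candidate_reproduces:
  assumes m: "m \<ge> 1" and f: "f \<in> PW (1/(2*m))"
  shows "f 0 = (\<integral>x. f (complex_of_real x) * cnj (kernel_candidate m (complex_of_real x))
                    * complex_of_real (1 - (sinc x)^2) \<partial>lborel)"
proof -
  interpret reproducing_symbol "kernel_symbol m" "1/(2*m)" "1 / \<bar>kernel_denom m\<bar>"
    by (rule reproducing_symbol_kernel_symbol[OF m])
  have "kernel_candidate m (complex_of_real x) = complex_of_real (cos_transform x)" for x
    using m by (simp add: kernel_candidate_of_real cos_transform_def integral_kernel_symbol_cos)
  then show ?thesis
    by (simp add: reproducing_at_0[OF f] mult.assoc)
qed

lemma kernel_value_at_0: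
  assumes m: "m \<ge> 1"
  shows "s_plus (u_m m) 0 / (m * kernel_denom m)
       = 1 / ((1 / sqrt 2) * cot (1 / (sqrt 2 * m)) - (2 * m - 1) / (2 * m))"
proof -
  define t where "t = 1 / (sqrt 2 * m)"
  have "1 \<le> sqrt 2 * m"
    using mult_mono[of 1 "sqrt 2" 1 m] m by simp
  then have "t \<le> 1"
    by (simp add: t_def)
  then have "t < pi"
    using pi_gt3 by linarith
  moreover have "t > 0" "t * m = 1 / sqrt 2" "t / sqrt 2 = 1 / (2 * m)"
    using m by (auto simp: t_def field_simps)
  ultimately have t: "t > 0" "t < pi" "t * m = 1 / sqrt 2" "t / sqrt 2 = 1 / (2 * m)"
    by auto
  have "sin t > 0"
    using t by (intro sin_gt_zero) auto
  have "u_m m \<noteq> 0"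
    using m by (simp add: u_m_def)
  then have "s_plus (u_m m) 0 = sin t / t"
    by (simp add: s_plus_def sinc_def pi_u_m t_def)
  then have "s_plus (u_m m) 0 / (m * kernel_denom m) = sin t / ((t * m) * kernel_denom m)"
    by (simp add: mult.assoc)
  also have "\<dots> = sqrt 2 * sin t / kernel_denom m"
    unfolding t(3) by simp
  also have "\<dots> = 1 / ((1 / sqrt 2) * (cos t / sin t) - (1 - t / sqrt 2))"
  proof -
    have "kernel_denom m = - sqrt 2 * sin t + t * sin t + cos t"
      by (simp add: kernel_denom_def pi_u_m t_def)
    then show ?thesis
      using \<open>sin t > 0\<close> by (simp add: field_simps)
  qed
  also have "1 - t / sqrt 2 = (2 * m - 1) / (2 * m)"
    using t m by (simp add: diff_divide_distrib)
  finally show ?thesis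
    by (simp add: t_def cot_def)
qed

theorem mainTheorem4:
  fixes m :: real and K :: "complex \<Rightarrow> complex \<Rightarrow> complex"
  assumes "m \<ge> 1"
    and "is_repr_kernel (1 / (2 * m)) K"
  shows "(\<forall>y::real. kscaled m K 0 (of_real y) =
           of_real (s_plus (u_m m) y /
             (- sqrt 2 * sin (pi * u_m m) + pi * u_m m * sin (pi * u_m m) + cos (pi * u_m m)))) \<and>
         K 0 0 = of_real (1 / ((1 / sqrt 2) * cot (1 / (sqrt 2 * m)) - (2 * m - 1) / (2 * m)))"
proof -
  have m: "m > 0"
    using assms(1) by simp
  have K: "K 0 w = kernel_candidate m w" for w
    by (rule is_repr_kernel_eqI[OF assms(2) kernel_candidate_PW kernel_candidate_reproduces[OF assms(1)]])
  have "kscaled m K 0 (of_real y) = of_real (s_plus (u_m m) y / kernel_denom m)" for y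
    unfolding kscaled_def mult_zero_right of_real_mult[symmetric] K kernel_candidate_of_real[OF m]
    using m kernel_denom_pos[OF assms(1)] by simp
  moreover have "K 0 0 = of_real (s_plus (u_m m) 0 / (m * kernel_denom m))"
    using kernel_candidate_of_real[OF m, of 0] by (simp add: K)
  ultimately show ?thesis
    unfolding kernel_denom_def[symmetric] kernel_value_at_0[OF assms(1), symmetric] by blast
qed

end
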